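(* Let $d$ be a prime, $n\ge 1$, $0\le k\le n$, and let $L\subset\mathbb{F}_d^{2n}$ be a subspace with $L\subset L^{\perp}$ and $\dim L=n-k$. Fix hyperbolic pairs $(g_1,h_1),\dots,(g_n,h_n)$ adapted to $L$, a unit vector $\ket{\overline{0^n}}$, the resulting code subspaces $\mathcal{C}^{(s)}$, $s\in\mathbb{F}_d^{n-k}$, coset representatives $\hat{x}(t)$, $t\in\mathbb{F}_d^{n-k}$, and the maps $\mathcal{R}^{(s,t)}$, all as described in the context. Let $P_n$ be a probability distribution on $\mathbb{F}_d^{2n}$ and let $\mathcal{A}:\mathcal{B}(\mathcal{H}^{\otimes n})\to\mathcal{B}(\mathcal{H}^{\otimes n})$ be the channel $\sigma\mapsto\sum_{x\in\mathbb{F}_d^{2n}}P_n(x)N_x\sigma N_x^{\dagger}$. Then for all $s,t\in\mathbb{F}_d^{n-k}$, $$F_{\rm e}\big(\pi_{\mathcal{C}^{(s)}},\ \mathcal{R}^{(s,t)}\mathcal{A}\big)=P_n\big(\hat{x}(t)+L\big)=\sum_{x\in\hat{x}(t)+L}P_n(x).$$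
   Context: $\mathcal{H}$ is a Hilbert space of prime dimension $d$ with orthonormal basis $\ket{0},\dots,\ket{d-1}$ indexed by $\mathbb{F}_d=\mathbb{Z}/d\mathbb{Z}$; $\omega$ is a primitive $d$-th root of unity. Define unitaries $X\ket{a}=\ket{a-1}$, $Z\ket{a}=\omega^a\ket{a}$, and for $(a,b)\in\mathbb{F}_d^2$ put $N_{(a,b)}=i^{ab}X^aZ^b$ if $d=2$ (with $i=\sqrt{-1}$) and $N_{(a,b)}=X^aZ^b$ if $d>2$. Identify $((x_1,z_1),\dots,(x_n,z_n))$ with $y=(x_1,z_1,\dots,x_n,z_n)\in\mathbb{F}_d^{2n}$ and set $N_y=N_{(x_1,z_1)}\otimes\cdots\otimes N_{(x_n,z_n)}$ on $\mathcal{H}^{\otimes n}$. The symplectic form is $\langle y,y'\rangle=\sum_{i=1}^n(x_iz_i'-z_ix_i')$, and $L^{\perp}=\{y:\langle x,y\rangle=0\ \forall x\in L\}$. Hyperbolic pairs adapted to $L$: vectors $g_1,\dots,g_n,h_1,\dots,h_n\in\mathbb{F}_d^{2n}$ with $g_1,\dots,g_{n-k}$ a basis of $L$ and $\langle g_i,h_j\rangle=\delta_{ij}$, $\langle g_i,g_j\rangle=0$, $\langle h_i,h_j\rangle=0$ for all $i,j$. Let $\ket{\overline{0^n}}$ be a unit vector with $N_{g_i}\ket{\overline{0^n}}=\ket{\overline{0^n}}$ for $i=1,\dots,n$, and for $l\in\mathbb{F}_d^n$ let $\ket{\overline{l}}=\prod_{i=1}^n(N_{h_i})^{l_i}\ket{\overline{0^n}}$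 (these form an orthonormal basis of $\mathcal{H}^{\otimes n}$). For $s\in\mathbb{F}_d^{n-k}$, $\mathcal{C}^{(s)}=\mathrm{span}\{\ket{\overline{(s,u)}}:u\in\mathbb{F}_d^k\}$, $\Pi_s$ is the orthogonal projection onto $\mathcal{C}^{(s)}$, and $\pi_{\mathcal{C}^{(s)}}=\Pi_s/d^k$. For each $t\in\mathbb{F}_d^{n-k}$, $\hat{x}(t)$ is a chosen element of the coset $\{x\in\mathbb{F}_d^{2n}:\langle g_i,x\rangle=t_i,\ i=1,\dots,n-k\}$ of $L^{\perp}$. For $s,t\in\mathbb{F}_d^{n-k}$, $\mathcal{R}^{(s,t)}$ is the completely positive map $\sigma\mapsto R_t^{(s)}\sigma R_t^{(s)\dagger}$ with $R_t^{(s)}=N_{\hat{x}(t)}^{\dagger}\Pi_{t+s}$. $F_{\rm e}$ denotes the (unnormalized) entanglement fidelity: for a density operator $\rho$ and a completely positive map $\mathcal{E}$ with Kraus operators $E_j$, $F_{\rm e}(\rho,\mathcal{E})=\sum_j|\mathrm{tr}(\rho E_j)|^2$. Composition $\mathcal{M}\mathcal{L}$ means $\sigma\mapsto\mathcal{M}(\mathcal{L}(\sigma))$. *)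

theory Defs
  imports Complex_Main "HOL-Computational_Algebra.Primes"
begin

text \<open>Operators and vectors on a finite-dimensional Hilbert space with orthonormal
basis indexed by a finite set I: an operator is its matrix (entries indexed by I x I),
a vector its coordinate function on I.\<close>

type_synonym 'i op = "'i \<Rightarrow> 'i \<Rightarrow> complex"
type_synonym 'i vec = "'i \<Rightarrow> complex"

definition opmul :: "'i set \<Rightarrow> 'i op \<Rightarrow> 'i op \<Rightarrow> 'i op" where
  "opmul I A B = (\<lambda>r c. \<Sum>j\<in>I. A r j * B j c)"

definition opid :: "'i op" where
  "opid = (\<lambda>r c. if r = c then 1 else 0)"

fun oppow :: "'i set \<Rightarrow> 'i op \<Rightarrow> nat \<Rightarrow> 'i op" where
  "oppow I A 0 = opid"
| "oppow I A (Suc m) = opmul I A (oppow I A m)"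

definition opscale :: "complex \<Rightarrow> 'i op \<Rightarrow> 'i op" where
  "opscale a A = (\<lambda>r c. a * A r c)"

definition adj :: "'i op \<Rightarrow> 'i op" where
  "adj A = (\<lambda>r c. cnj (A c r))"

definition tr :: "'i set \<Rightarrow> 'i op \<Rightarrow> complex" where
  "tr I A = (\<Sum>j\<in>I. A j j)"

definition opapp :: "'i set \<Rightarrow> 'i op \<Rightarrow> 'i vec \<Rightarrow> 'i vec" where
  "opapp I A v = (\<lambda>r. \<Sum>j\<in>I. A r j * v j)"

definition vinner :: "'i set \<Rightarrow> 'i vec \<Rightarrow> 'i vec \<Rightarrow> complex" where
  "vinner I u v = (\<Sum>j\<in>I. cnj (u j) * v j)"

definition ketbra :: "'i vec \<Rightarrow> 'i vec \<Rightarrow> 'i op" where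
  "ketbra u v = (\<lambda>r c. u r * cnj (v c))"

definition opprod :: "'i set \<Rightarrow> 'i op list \<Rightarrow> 'i op" where
  "opprod I As = foldr (opmul I) As opid"

definition op_eq_on :: "'i set \<Rightarrow> 'i op \<Rightarrow> 'i op \<Rightarrow> bool" where
  "op_eq_on I A B \<longleftrightarrow> (\<forall>r\<in>I. \<forall>c\<in>I. A r c = B r c)"

text \<open>F_d^m: functions nat => nat with values in {0..<d} on {0..<m}, zero elsewhere.\<close>

definition Fvec :: "nat \<Rightarrow> nat \<Rightarrow> (nat \<Rightarrow> nat) set" where
  "Fvec d m = {v. (\<forall>i<m. v i < d) \<and> (\<forall>i\<ge>m. v i = 0)}"

definition vadd :: "nat \<Rightarrow> (nat \<Rightarrow> nat) \<Rightarrow> (nat \<Rightarrow> nat) \<Rightarrow> (nat \<Rightarrow> nat)" where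
  "vadd d u v = (\<lambda>i. (u i + v i) mod d)"

definition vsmul :: "nat \<Rightarrow> nat \<Rightarrow> (nat \<Rightarrow> nat) \<Rightarrow> (nat \<Rightarrow> nat)" where
  "vsmul d a v = (\<lambda>i. (a * v i) mod d)"

definition lincomb :: "nat \<Rightarrow> nat \<Rightarrow> (nat \<Rightarrow> nat) \<Rightarrow> (nat \<Rightarrow> nat \<Rightarrow> nat) \<Rightarrow> (nat \<Rightarrow> nat)" where
  "lincomb d m c g = (\<lambda>i. (\<Sum>j<m. c j * g j i) mod d)"

text \<open>y = (x_1,z_1,...,x_n,z_n) stored as x_i = y(2i), z_i = y(2i+1), i = 0..n-1.
Symplectic form sum_i (x_i z'_i - z_i x'_i) in F_d.\<close>
definition sympl :: "nat \<Rightarrow> nat \<Rightarrow> (nat \<Rightarrow> nat) \<Rightarrow> (nat \<Rightarrow> nat) \<Rightarrow> nat" where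
  "sympl d n y y' = nat ((\<Sum>i<n. int (y (2*i)) * int (y' (2*i+1))
                              - int (y (2*i+1)) * int (y' (2*i))) mod int d)"

text \<open>Single-qudit operators on basis {0..<d}: X|a> = |a-1>, Z|a> = omega^a |a>.\<close>
definition Xop :: "nat \<Rightarrow> nat op" where
  "Xop d = (\<lambda>r c. if r = (c + d - 1) mod d then 1 else 0)"

definition Zop :: "nat \<Rightarrow> complex \<Rightarrow> nat op" where
  "Zop d \<omega> = (\<lambda>r c. if r = c then \<omega> ^ c else 0)"

definition N1 :: "nat \<Rightarrow> complex \<Rightarrow> nat \<Rightarrow> nat \<Rightarrow> nat op" where
  "N1 d \<omega> a b = opscale (if d = 2 then \<i> ^ (a * b) else 1)
      (opmul {..<d} (oppow {..<d} (Xop d) a) (oppow {..<d} (Zop d \<omega>) b))"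

text \<open>N_y = N_(x_1,z_1) tensor ... tensor N_(x_n,z_n) on basis Fvec d n (tensor product
written in coordinates: matrix entries multiply).\<close>
definition Pauli :: "nat \<Rightarrow> complex \<Rightarrow> nat \<Rightarrow> (nat \<Rightarrow> nat) \<Rightarrow> (nat \<Rightarrow> nat) op" where
  "Pauli d \<omega> n y = (\<lambda>r c. \<Prod>i<n. N1 d \<omega> (y (2*i)) (y (2*i+1)) (r i) (c i))"

definition catv :: "nat \<Rightarrow> (nat \<Rightarrow> nat) \<Rightarrow> (nat \<Rightarrow> nat) \<Rightarrow> (nat \<Rightarrow> nat)" where
  "catv m s u = (\<lambda>i. if i < m then s i else u (i - m))"

definition ket :: "nat \<Rightarrow> complex \<Rightarrow> nat \<Rightarrow> (nat \<Rightarrow> nat \<Rightarrow> nat) \<Rightarrow> (nat \<Rightarrow> nat) vec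
                   \<Rightarrow> (nat \<Rightarrow> nat) \<Rightarrow> (nat \<Rightarrow> nat) vec" where
  "ket d \<omega> n h \<psi>0 l = opapp (Fvec d n)
      (opprod (Fvec d n) (map (\<lambda>i. oppow (Fvec d n) (Pauli d \<omega> n (h i)) (l i)) [0..<n])) \<psi>0"

text \<open>Projection Pi_s onto C^(s) = span {|(s,u)-bar> : u in F_d^k}, written as the sum of
rank-one projectors onto the (orthonormal) spanning vectors.\<close>
definition codeproj :: "nat \<Rightarrow> complex \<Rightarrow> nat \<Rightarrow> nat \<Rightarrow> (nat \<Rightarrow> nat \<Rightarrow> nat) \<Rightarrow> (nat \<Rightarrow> nat) vec
                        \<Rightarrow> (nat \<Rightarrow> nat) \<Rightarrow> (nat \<Rightarrow> nat) op" where
  "codeproj d \<omega> n k h \<psi>0 s = (\<lambda>r c. \<Sum>u\<in>Fvec d k.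
      ketbra (ket d \<omega> n h \<psi>0 (catv (n - k) s u)) (ket d \<omega> n h \<psi>0 (catv (n - k) s u)) r c)"

definition chanA :: "nat \<Rightarrow> complex \<Rightarrow> nat \<Rightarrow> ((nat \<Rightarrow> nat) \<Rightarrow> real)
                     \<Rightarrow> (nat \<Rightarrow> nat) op \<Rightarrow> (nat \<Rightarrow> nat) op" where
  "chanA d \<omega> n P \<sigma> = (\<lambda>r c. \<Sum>x\<in>Fvec d (2*n). complex_of_real (P x) *
      opmul (Fvec d n) (opmul (Fvec d n) (Pauli d \<omega> n x) \<sigma>) (adj (Pauli d \<omega> n x)) r c)"

definition Rop :: "nat \<Rightarrow> complex \<Rightarrow> nat \<Rightarrow> nat \<Rightarrow> (nat \<Rightarrow> nat \<Rightarrow> nat) \<Rightarrow> (nat \<Rightarrow> nat) vec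
                  \<Rightarrow> ((nat \<Rightarrow> nat) \<Rightarrow> (nat \<Rightarrow> nat)) \<Rightarrow> (nat \<Rightarrow> nat) \<Rightarrow> (nat \<Rightarrow> nat) \<Rightarrow> (nat \<Rightarrow> nat) op" where
  "Rop d \<omega> n k h \<psi>0 xhat s t = opmul (Fvec d n) (adj (Pauli d \<omega> n (xhat t)))
      (codeproj d \<omega> n k h \<psi>0 (vadd d t s))"

definition Rmap :: "nat \<Rightarrow> complex \<Rightarrow> nat \<Rightarrow> nat \<Rightarrow> (nat \<Rightarrow> nat \<Rightarrow> nat) \<Rightarrow> (nat \<Rightarrow> nat) vec
                  \<Rightarrow> ((nat \<Rightarrow> nat) \<Rightarrow> (nat \<Rightarrow> nat)) \<Rightarrow> (nat \<Rightarrow> nat) \<Rightarrow> (nat \<Rightarrow> nat)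
                  \<Rightarrow> (nat \<Rightarrow> nat) op \<Rightarrow> (nat \<Rightarrow> nat) op" where
  "Rmap d \<omega> n k h \<psi>0 xhat s t \<sigma> = opmul (Fvec d n)
      (opmul (Fvec d n) (Rop d \<omega> n k h \<psi>0 xhat s t) \<sigma>) (adj (Rop d \<omega> n k h \<psi>0 xhat s t))"

definition has_kraus :: "'i set \<Rightarrow> ('i op \<Rightarrow> 'i op) \<Rightarrow> ('j \<Rightarrow> 'i op) \<Rightarrow> 'j set \<Rightarrow> bool" where
  "has_kraus I E K J \<longleftrightarrow> finite J \<and>
     (\<forall>\<sigma>. op_eq_on I (E \<sigma>) (\<lambda>r c. \<Sum>j\<in>J. opmul I (opmul I (K j) \<sigma>) (adj (K j)) r c))"

definition Fe :: "'i set \<Rightarrow> 'i op \<Rightarrow> ('j \<Rightarrow> 'i op) \<Rightarrow> 'j set \<Rightarrow> real" where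
  "Fe I \<rho> K J = (\<Sum>j\<in>J. (cmod (tr I (opmul I \<rho> (K j))))^2)"

end

theory Submission
  imports Defs "Jordan_Normal_Form.Determinant" "HOL-Number_Theory.Cong"
begin

text \<open>
Put f(x) = tr(pi_s R N_x) for x in F_d^(2n) (fid_amp below). The channel has the Kraus operators
sqrt(P(x)) R N_x, and the entanglement fidelity does not depend on the Kraus family, so
F_e = sum_x P(x) |f(x)|^2. If x = xhat(t) + y with y in L, then N_y acts on C(s) as a unimodular
scalar, while N_xhat(t) maps C(s) isometrically into C(t+s); hence |f(x)| = 1. On the other hand
the Pauli operators are orthogonal, sum_x |tr(A N_x)|^2 = d^n tr(A^dagger A), which gives
sum_x |f(x)|^2 = d^(n-k), the number of points of the coset xhat(t) + L. So f vanishes off the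
coset.
\<close>

section \<open>Coordinate vectors over F_d\<close>

lemma Fvec_0: "Fvec d 0 = {\<lambda>_. 0}"
  by (auto simp: Fvec_def)

lemma Fvec_Suc: "Fvec d (Suc m) = (\<lambda>(v, p). v(m := p)) ` (Fvec d m \<times> {..<d})"
proof
  show "Fvec d (Suc m) \<subseteq> (\<lambda>(v, p). v(m := p)) ` (Fvec d m \<times> {..<d})"
  proof
    fix x assume x: "x \<in> Fvec d (Suc m)"
    have "x = (\<lambda>(v, p). v(m := p)) (x(m := 0), x m)" by auto
    moreover have "(x(m := 0), x m) \<in> Fvec d m \<times> {..<d}"
      using x by (auto simp: Fvec_def less_Suc_eq)
    ultimately show "x \<in> (\<lambda>(v, p). v(m := p)) ` (Fvec d m \<times> {..<d})" by blast
  qed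
qed (auto simp: Fvec_def less_Suc_eq)

lemma inj_on_Fvec_Suc: "inj_on (\<lambda>(v, p). v(m := p)) (Fvec d m \<times> {..<d})"
proof (rule inj_onI, clarify)
  fix v p v' p'
  assume v: "v \<in> Fvec d m" "v' \<in> Fvec d m" and eq: "v(m := p) = v'(m := p')"
  have "v i = v' i" for i
    using fun_cong[OF eq, of i] v by (cases "i = m") (auto simp: Fvec_def)
  then show "v = v' \<and> p = p'" using fun_cong[OF eq, of m] by auto
qed

lemma finite_Fvec [simp]: "finite (Fvec d m)"
  by (induction m) (auto simp: Fvec_0 Fvec_Suc)

lemma sum_Fvec_Suc: "(\<Sum>x\<in>Fvec d (Suc m). F x) = (\<Sum>v\<in>Fvec d m. \<Sum>p<d. F (v(m := p)))"
proof -
  have "sum F (Fvec d (Suc m)) = sum (F \<circ> (\<lambda>(v, p). v(m := p))) (Fvec d m \<times> {..<d})"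
    unfolding Fvec_Suc by (rule sum.reindex[OF inj_on_Fvec_Suc])
  then show ?thesis unfolding sum.cartesian_product by (simp add: split_def)
qed

lemma card_Fvec: "card (Fvec d m) = d ^ m"
proof (induction m)
  case (Suc m)
  have "card (Fvec d (Suc m)) = card (Fvec d m \<times> {..<d})"
    unfolding Fvec_Suc by (rule card_image[OF inj_on_Fvec_Suc])
  then show ?case using Suc by (simp add: card_cartesian_product)
qed (simp add: Fvec_0)

lemma sum_Fvec_pairs_prod:
  fixes G :: "nat \<Rightarrow> nat \<Rightarrow> nat \<Rightarrow> 'a::comm_semiring_1"
  shows "(\<Sum>x\<in>Fvec d (2*m). \<Prod>i<m. G i (x (2*i)) (x (2*i+1))) = (\<Prod>i<m. \<Sum>p<d. \<Sum>q<d. G i p q)"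
proof (induction m)
  case (Suc m)
  have "(\<Sum>x\<in>Fvec d (2 * Suc m). \<Prod>i<Suc m. G i (x (2*i)) (x (2*i+1)))
      = (\<Sum>v\<in>Fvec d (2*m). \<Sum>p<d. \<Sum>q<d. (\<Prod>i<m. G i (v (2*i)) (v (2*i+1))) * G m p q)"
    unfolding mult_Suc_right add_2_eq_Suc sum_Fvec_Suc
    by (intro sum.cong refl) (simp add: lessThan_Suc mult.commute)
  also have "\<dots> = (\<Sum>v\<in>Fvec d (2*m). \<Prod>i<m. G i (v (2*i)) (v (2*i+1))) * (\<Sum>p<d. \<Sum>q<d. G m p q)"
    by (subst sum_product) (simp only: sum_distrib_left)
  finally show ?case using Suc by (simp add: lessThan_Suc mult.commute)
qed (simp add: Fvec_0)

lemma Fvec_eqI: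
  assumes "a \<in> Fvec d m" "b \<in> Fvec d m" "\<forall>i<m. a i = b i"
  shows "a = b"
proof
  fix i show "a i = b i"
    using assms by (cases "i < m") (auto simp: Fvec_def)
qed

lemma zero_in_Fvec: "0 < d \<Longrightarrow> (\<lambda>_. 0) \<in> Fvec d m"
  by (simp add: Fvec_def)

lemma vadd_in_Fvec: "0 < d \<Longrightarrow> a \<in> Fvec d m \<Longrightarrow> b \<in> Fvec d m \<Longrightarrow> vadd d a b \<in> Fvec d m"
  by (simp add: Fvec_def vadd_def)

lemma vadd_commute: "vadd d a b = vadd d b a"
  unfolding vadd_def by (simp add: add.commute)

lemma catv_in_Fvec: "s \<in> Fvec d m \<Longrightarrow> u \<in> Fvec d k \<Longrightarrow> catv m s u \<in> Fvec d (m + k)"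
  by (auto simp: Fvec_def catv_def)

lemma inj_on_catv: "inj_on (catv m s) (Fvec d k)"
proof (rule inj_onI)
  fix u v assume u: "u \<in> Fvec d k" and v: "v \<in> Fvec d k" and e: "catv m s u = catv m s v"
  have "u j = v j" for j
    using fun_cong[OF e, of "j + m"] by (simp add: catv_def)
  then show "u = v" by blast
qed

lemma add_mod_left_inj:
  assumes "p < (d::nat)" "p' < d" "(a + p) mod d = (a + p') mod d"
  shows "p = p'"
proof -
  have "[a + p = a + p'] (mod d)" using assms(3) by (simp add: cong_def)
  then have "[p = p'] (mod d)" by (simp add: cong_add_lcancel_nat)
  then show ?thesis using assms(1,2) by (rule cong_less_modulus_unique_nat)
qed

lemma sum_add_mod_shift:
  assumes "(d::nat) > 0"
  shows "(\<Sum>p<d. F ((a + p) mod d)) = (\<Sum>q<d. F q)"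
proof -
  have inj: "inj_on (\<lambda>p. (a + p) mod d) {..<d}"
    by (rule inj_onI) (auto intro: add_mod_left_inj)
  have "(\<lambda>p. (a + p) mod d) ` {..<d} = {..<d}"
    by (rule endo_inj_surj) (use assms inj in auto)
  then show ?thesis
    using inj by (intro sum.reindex_bij_betw) (simp add: bij_betw_def)
qed

lemma mod_diff_cong: "c' < d \<Longrightarrow> [int ((c + (d - c')) mod d) = int c - int c'] (mod int d)"
proof -
  assume "c' < d"
  then have "int (c + (d - c')) = (int c - int c') + int d" by simp
  then show ?thesis unfolding cong_def zmod_int by (simp only: mod_mod_trivial mod_add_self2)
qed

lemma mod_diff_eq_0_iff: "c < (d::nat) \<Longrightarrow> c' < d \<Longrightarrow> (c + (d - c')) mod d = 0 \<longleftrightarrow> c = c'"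
  by (cases "c' \<le> c") (auto simp: mod_if)

lemma prod_if_else_zero:
  "(\<Prod>i<(m::nat). if P i then f i else (0::'a::comm_semiring_1)) = (if \<forall>i<m. P i then \<Prod>i<m. f i else 0)"
  by (induction m) (auto simp: lessThan_Suc less_Suc_eq)

section \<open>Matrices and vectors indexed by a finite set\<close>

lemma sum_delta_mult_left:
  assumes "finite I" "a \<in> I"
  shows "(\<Sum>p\<in>I. (if a = p then 1 else 0) * f p) = (f a :: 'a::comm_semiring_1)"
proof -
  have "(\<Sum>p\<in>I. (if a = p then 1 else 0) * f p) = (\<Sum>p\<in>I. if a = p then f p else 0)"
    by (rule sum.cong) auto
  then show ?thesis using assms by simp
qed

lemma sum_delta_mult_right:
  assumes "finite I" "a \<in> I"
  shows "(\<Sum>p\<in>I. f p * (if p = a then 1 else 0)) = (f a :: 'a::comm_semiring_1)"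
  using sum_delta_mult_left[OF assms, of f] by (simp add: mult.commute eq_commute)

lemma opmul_assoc: "opmul I (opmul I A B) C = opmul I A (opmul I B C)"
proof (intro ext)
  fix r c
  have "opmul I (opmul I A B) C r c = (\<Sum>j\<in>I. \<Sum>m\<in>I. A r m * B m j * C j c)"
    unfolding opmul_def by (simp add: sum_distrib_right)
  also have "\<dots> = (\<Sum>m\<in>I. \<Sum>j\<in>I. A r m * B m j * C j c)" by (rule sum.swap)
  also have "\<dots> = opmul I A (opmul I B C) r c"
    unfolding opmul_def by (simp add: sum_distrib_left mult.assoc)
  finally show "opmul I (opmul I A B) C r c = opmul I A (opmul I B C) r c" .
qed

lemma adj_opmul: "adj (opmul I A B) = opmul I (adj B) (adj A)"
  unfolding adj_def opmul_def by (intro ext) (simp add: mult.commute)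

lemma adj_opscale: "adj (opscale c A) = opscale (cnj c) (adj A)"
  unfolding adj_def opscale_def by simp

lemma opmul_opscale_left: "opmul I (opscale c A) B = opscale c (opmul I A B)"
  unfolding opscale_def opmul_def by (intro ext) (simp add: sum_distrib_left mult.assoc)

lemma opmul_opscale_right: "opmul I A (opscale c B) = opscale c (opmul I A B)"
  unfolding opscale_def opmul_def by (intro ext) (simp add: sum_distrib_left mult_ac)

lemma opscale_opscale: "opscale a (opscale b A) = opscale (a * b) A"
  unfolding opscale_def by (simp add: mult.assoc)

lemma opmul_sum_left: "opmul I (\<lambda>r c. \<Sum>x\<in>X. F x r c) B = (\<lambda>r c. \<Sum>x\<in>X. opmul I (F x) B r c)"
  unfolding opmul_def by (intro ext) (simp add: sum_distrib_right sum.swap[of _ I X])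

lemma opmul_sum_right: "opmul I A (\<lambda>r c. \<Sum>x\<in>X. F x r c) = (\<lambda>r c. \<Sum>x\<in>X. opmul I A (F x) r c)"
  unfolding opmul_def by (intro ext) (simp add: sum_distrib_left sum.swap[of _ I X])

lemma opapp_opmul: "opapp I (opmul I A B) v r = opapp I A (opapp I B v) r"
  unfolding opapp_def opmul_def
  by (simp add: sum_distrib_left sum_distrib_right mult.assoc, subst sum.swap, simp)

lemma opapp_opid: "finite I \<Longrightarrow> r \<in> I \<Longrightarrow> opapp I opid v r = v r"
  unfolding opapp_def opid_def by (rule sum_delta_mult_left)

lemma opapp_cong: "(\<And>j. j \<in> I \<Longrightarrow> v j = w j) \<Longrightarrow> opapp I A v r = opapp I A w r"
  unfolding opapp_def by simp

lemma opapp_scale: "opapp I A (\<lambda>j. c * v j) r = c * opapp I A v r"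
  unfolding opapp_def by (simp add: sum_distrib_left mult_ac)

lemma opapp_ketbra_sum:
  "opapp I (\<lambda>r c. \<Sum>u\<in>U. ketbra (V u) (V u) r c) w r = (\<Sum>u\<in>U. V u r * vinner I (V u) w)"
  unfolding ketbra_def vinner_def opapp_def
  by (simp add: sum_distrib_left sum_distrib_right mult_ac, subst sum.swap, simp)

lemma vinner_cong:
  "(\<And>j. j \<in> A \<Longrightarrow> u j = u' j) \<Longrightarrow> (\<And>j. j \<in> A \<Longrightarrow> v j = v' j) \<Longrightarrow> vinner A u v = vinner A u' v'"
  unfolding vinner_def by (rule sum.cong) simp_all

lemma vinner_scale_right: "vinner A z (\<lambda>r. c * v r) = c * vinner A z v"
  unfolding vinner_def by (simp add: sum_distrib_left mult_ac)

lemma vinner_sum_right: "vinner A z (\<lambda>r. \<Sum>u\<in>U. V u r * c u) = (\<Sum>u\<in>U. c u * vinner A z (V u))"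
  unfolding vinner_def by (simp add: sum_distrib_left mult_ac sum.swap[of _ A U])

lemma vinner_cnj_commute: "vinner A v w = cnj (vinner A w v)"
  unfolding vinner_def by (simp add: mult.commute)

lemma vinner_adj: "vinner I v (opapp I (adj A) w) = vinner I (opapp I A v) w"
  unfolding vinner_def opapp_def adj_def
  by (simp add: sum_distrib_left sum_distrib_right mult_ac, subst sum.swap, simp)

lemma tr_opmul_opscale_left: "tr I (opmul I (opscale c A) M) = c * tr I (opmul I A M)"
  unfolding tr_def opmul_def opscale_def by (simp add: sum_distrib_left mult_ac)

lemma tr_opmul_opscale_right: "tr I (opmul I A (opscale c M)) = c * tr I (opmul I A M)"
  unfolding tr_def opmul_def opscale_def by (simp add: sum_distrib_left mult_ac)

lemma tr_ketbra_sum: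
  "tr I (opmul I (\<lambda>r c. \<Sum>u\<in>U. ketbra (V u) (V u) r c) M) = (\<Sum>u\<in>U. vinner I (V u) (opapp I M (V u)))"
proof -
  have "tr I (opmul I (\<lambda>r c. \<Sum>u\<in>U. ketbra (V u) (V u) r c) M)
      = (\<Sum>j\<in>I. \<Sum>m\<in>I. \<Sum>u\<in>U. V u j * cnj (V u m) * M m j)"
    unfolding tr_def opmul_def ketbra_def by (simp add: sum_distrib_right)
  also have "\<dots> = (\<Sum>u\<in>U. \<Sum>m\<in>I. \<Sum>j\<in>I. V u j * cnj (V u m) * M m j)"
    by (subst sum.swap, subst (2) sum.swap, subst sum.swap, simp)
  also have "\<dots> = (\<Sum>u\<in>U. vinner I (V u) (opapp I M (V u)))"
    unfolding vinner_def opapp_def by (simp add: sum_distrib_left mult_ac)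
  finally show ?thesis .
qed

text \<open>A square matrix with orthonormal columns also has orthonormal rows (a left inverse of a
square matrix is a right inverse).\<close>

lemma orthonormal_resolution_of_identity:
  fixes V :: "'a \<Rightarrow> 'a \<Rightarrow> complex"
  assumes F: "finite F"
    and on: "\<And>l l'. l \<in> F \<Longrightarrow> l' \<in> F \<Longrightarrow> (\<Sum>r\<in>F. cnj (V l r) * V l' r) = (if l = l' then 1 else 0)"
    and r: "r \<in> F" and c: "c \<in> F"
  shows "(\<Sum>l\<in>F. V l r * cnj (V l c)) = (if r = c then 1 else 0)"
proof -
  define m where "m = card F"
  obtain e where e: "bij_betw e {0..<m} F" using ex_bij_betw_nat_finite[OF F] m_def by blast
  define A where "A = mat m m (\<lambda>(i, j). cnj (V (e i) (e j)))"
  define B where "B = mat m m (\<lambda>(i, j). V (e j) (e i))"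
  have Ac: "A \<in> carrier_mat m m" and Bc: "B \<in> carrier_mat m m" unfolding A_def B_def by auto
  have inj: "inj_on e {0..<m}" and img: "e ` {0..<m} = F" using e by (simp_all add: bij_betw_def)
  have sumF: "sum G F = (\<Sum>p\<in>{0..<m}. G (e p))" for G :: "'a \<Rightarrow> complex"
    using sum.reindex[OF inj, of G] img by simp
  have eF: "i < m \<Longrightarrow> e i \<in> F" for i using img by auto
  have einj: "i < m \<Longrightarrow> j < m \<Longrightarrow> (e i = e j) = (i = j)" for i j
    using inj by (auto dest: inj_onD)
  have "A * B = 1\<^sub>m m"
  proof (rule eq_matI)
    fix i j assume "i < dim_row (1\<^sub>m m)" "j < dim_col (1\<^sub>m m)"
    then have i: "i < m" and j: "j < m" by auto
    have "(A * B) $$ (i, j) = (\<Sum>r\<in>F. cnj (V (e i) r) * V (e j) r)"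
      using i j Ac Bc unfolding A_def B_def sumF by (simp add: scalar_prod_def)
    also have "\<dots> = (if i = j then 1 else 0)" by (simp add: on eF i j einj)
    finally show "(A * B) $$ (i, j) = 1\<^sub>m m $$ (i, j)" using i j by simp
  qed (use Ac Bc in simp_all)
  then have BA: "B * A = 1\<^sub>m m" by (rule mat_mult_left_right_inverse[OF Ac Bc])
  obtain i where i: "i < m" "r = e i" using r img by auto
  obtain j where j: "j < m" "c = e j" using c img by auto
  have "(\<Sum>l\<in>F. V l r * cnj (V l c)) = (B * A) $$ (i, j)"
    using i j Ac Bc unfolding A_def B_def sumF by (simp add: scalar_prod_def)
  also have "\<dots> = (if r = c then 1 else 0)" using BA i j einj by simp
  finally show ?thesis .
qed

lemma sum_orthogonal_expansion:
  fixes \<beta> :: "'x \<Rightarrow> 'j \<Rightarrow> complex"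
  assumes J: "finite J"
    and orth: "\<And>j j'. j \<in> J \<Longrightarrow> j' \<in> J \<Longrightarrow> (\<Sum>x\<in>X. \<beta> x j * cnj (\<beta> x j')) = (if j = j' then D else 0)"
  shows "(\<Sum>x\<in>X. (\<Sum>j\<in>J. \<alpha> j * \<beta> x j) * cnj (\<Sum>j\<in>J. \<gamma> j * \<beta> x j)) = D * (\<Sum>j\<in>J. \<alpha> j * cnj (\<gamma> j))"
proof -
  have "(\<Sum>x\<in>X. (\<Sum>j\<in>J. \<alpha> j * \<beta> x j) * cnj (\<Sum>j\<in>J. \<gamma> j * \<beta> x j))
      = (\<Sum>j\<in>J. \<Sum>j'\<in>J. (\<alpha> j * cnj (\<gamma> j')) * (\<Sum>x\<in>X. \<beta> x j * cnj (\<beta> x j')))"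
  proof -
    have "(\<Sum>x\<in>X. (\<Sum>j\<in>J. \<alpha> j * \<beta> x j) * cnj (\<Sum>j\<in>J. \<gamma> j * \<beta> x j))
        = (\<Sum>x\<in>X. \<Sum>j\<in>J. \<Sum>j'\<in>J. (\<alpha> j * cnj (\<gamma> j')) * (\<beta> x j * cnj (\<beta> x j')))"
      by (simp only: cnj_sum complex_cnj_mult sum_product mult_ac)
    also have "\<dots> = (\<Sum>j\<in>J. \<Sum>j'\<in>J. \<Sum>x\<in>X. (\<alpha> j * cnj (\<gamma> j')) * (\<beta> x j * cnj (\<beta> x j')))"
      by (subst sum.swap) (rule sum.cong[OF refl], rule sum.swap)
    finally show ?thesis by (simp only: sum_distrib_left)
  qed
  also have "\<dots> = (\<Sum>j\<in>J. \<Sum>j'\<in>J. if j = j' then \<alpha> j * cnj (\<gamma> j') * D else 0)"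
    by (intro sum.cong refl) (simp add: orth)
  also have "\<dots> = D * (\<Sum>j\<in>J. \<alpha> j * cnj (\<gamma> j))"
    using J by (simp add: sum_distrib_left mult_ac)
  finally show ?thesis .
qed

section \<open>Entanglement fidelity\<close>

text \<open>F_e computed from a Kraus family only depends on the values of the channel on the matrix
units |a><c|.\<close>

lemma Fe_eq_channel_entries:
  assumes kr: "has_kraus I E K J" and I: "finite I"
  shows "complex_of_real (Fe I \<rho> K J) =
    (\<Sum>c\<in>I. \<Sum>a\<in>I. \<Sum>e\<in>I. \<Sum>b\<in>I. \<rho> a b * (cnj (\<rho> c e) *
        E (\<lambda>p q. if p = a \<and> q = c then 1 else 0) b e))"
proof -
  have E_entry: "E (\<lambda>p q. if p = a \<and> q = c then 1 else 0) b e = (\<Sum>j\<in>J. K j b a * cnj (K j e c))"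
    if "a \<in> I" "b \<in> I" "c \<in> I" "e \<in> I" for a b c e
  proof -
    have "E (\<lambda>p q. if p = a \<and> q = c then 1 else 0) b e
        = (\<Sum>j\<in>J. opmul I (opmul I (K j) (\<lambda>p q. if p = a \<and> q = c then 1 else 0)) (adj (K j)) b e)"
      using kr that by (simp add: has_kraus_def op_eq_on_def)
    also have "\<dots> = (\<Sum>j\<in>J. K j b a * cnj (K j e c))"
    proof (rule sum.cong[OF refl])
      fix j
      have "(\<Sum>p\<in>I. K j b p * (if p = a \<and> q = c then 1 else 0)) = (if q = c then K j b a else 0)" for q
        using that I by (cases "q = c") (simp_all add: sum_delta_mult_right)
      then have "opmul I (opmul I (K j) (\<lambda>p q. if p = a \<and> q = c then 1 else 0)) (adj (K j)) b e
          = (\<Sum>q\<in>I. (if q = c then K j b a else 0) * cnj (K j e q))"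
        by (simp only: opmul_def adj_def)
      also have "\<dots> = (\<Sum>q\<in>I. if c = q then K j b a * cnj (K j e q) else 0)"
        by (rule sum.cong) auto
      also have "\<dots> = K j b a * cnj (K j e c)" using that I by simp
      finally show "opmul I (opmul I (K j) (\<lambda>p q. if p = a \<and> q = c then 1 else 0)) (adj (K j)) b e
          = K j b a * cnj (K j e c)" .
    qed
    finally show ?thesis .
  qed
  have "complex_of_real (Fe I \<rho> K J) = (\<Sum>j\<in>J. tr I (opmul I \<rho> (K j)) * cnj (tr I (opmul I \<rho> (K j))))"
    unfolding Fe_def by (simp only: of_real_sum complex_norm_square)
  also have "\<dots> = (\<Sum>j\<in>J. \<Sum>c\<in>I. \<Sum>a\<in>I. \<Sum>e\<in>I. \<Sum>b\<in>I. \<rho> a b * (cnj (\<rho> c e) * (K j b a * cnj (K j e c))))"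
    unfolding tr_def opmul_def
    by (simp only: sum_product sum_distrib_left sum_distrib_right cnj_sum complex_cnj_mult mult_ac)
  also have "\<dots> = (\<Sum>c\<in>I. \<Sum>a\<in>I. \<Sum>e\<in>I. \<Sum>b\<in>I. \<rho> a b * (cnj (\<rho> c e) * (\<Sum>j\<in>J. K j b a * cnj (K j e c))))"
    by (simp only: sum.swap[of _ J] sum_distrib_left)
  also have "\<dots> = (\<Sum>c\<in>I. \<Sum>a\<in>I. \<Sum>e\<in>I. \<Sum>b\<in>I. \<rho> a b * (cnj (\<rho> c e) *
        E (\<lambda>p q. if p = a \<and> q = c then 1 else 0) b e))"
    by (intro sum.cong refl) (simp add: E_entry)
  finally show ?thesis .
qed

lemma Fe_kraus_independent:
  assumes "has_kraus I E K J" "has_kraus I E K' J'" "finite I"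
  shows "Fe I \<rho> K J = Fe I \<rho> K' J'"
  using Fe_eq_channel_entries[OF assms(1,3), of \<rho>] Fe_eq_channel_entries[OF assms(2,3), of \<rho>]
  by (metis of_real_eq_iff)

lemma has_kraus_sandwich_mixture:
  fixes R :: "'i op" and N :: "'x \<Rightarrow> 'i op" and w :: "'x \<Rightarrow> real"
  assumes X: "finite X" and w: "\<And>x. x \<in> X \<Longrightarrow> w x \<ge> 0"
  shows "has_kraus I (\<lambda>\<sigma>. opmul I (opmul I R (\<lambda>r c. \<Sum>x\<in>X. complex_of_real (w x) *
              opmul I (opmul I (N x) \<sigma>) (adj (N x)) r c)) (adj R))
           (\<lambda>x. opscale (complex_of_real (sqrt (w x))) (opmul I R (N x))) X"
  unfolding has_kraus_def op_eq_on_def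
proof (intro conjI X allI ballI)
  fix \<sigma> :: "'i op" and r c
  define M where "M x = opmul I (opmul I (N x) \<sigma>) (adj (N x))" for x
  have mixture: "(\<lambda>r c. \<Sum>x\<in>X. complex_of_real (w x) * opmul I (opmul I (N x) \<sigma>) (adj (N x)) r c)
      = (\<lambda>r c. \<Sum>x\<in>X. opscale (complex_of_real (w x)) (M x) r c)"
    unfolding M_def opscale_def by simp
  have summand: "opmul I (opmul I (opscale (complex_of_real (sqrt (w x))) (opmul I R (N x))) \<sigma>)
             (adj (opscale (complex_of_real (sqrt (w x))) (opmul I R (N x))))
         = opscale (complex_of_real (w x)) (opmul I (opmul I R (M x)) (adj R))" if x: "x \<in> X" for x
  proof -
    have sq: "cnj (complex_of_real (sqrt (w x))) * complex_of_real (sqrt (w x)) = complex_of_real (w x)"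
      using w[OF x] by (simp flip: of_real_mult)
    have "opmul I (opmul I (opmul I R (N x)) \<sigma>) (adj (opmul I R (N x))) = opmul I (opmul I R (M x)) (adj R)"
      unfolding M_def adj_opmul by (simp only: opmul_assoc)
    then show ?thesis
      by (simp only: adj_opscale opmul_opscale_left opmul_opscale_right opscale_opscale sq)
  qed
  have "opmul I (opmul I R (\<lambda>r c. \<Sum>x\<in>X. opscale (complex_of_real (w x)) (M x) r c)) (adj R)
      = (\<lambda>r c. \<Sum>x\<in>X. opscale (complex_of_real (w x)) (opmul I (opmul I R (M x)) (adj R)) r c)"
    by (simp only: opmul_sum_right opmul_sum_left opmul_opscale_left opmul_opscale_right)
  then show "opmul I (opmul I R (\<lambda>r c. \<Sum>x\<in>X. complex_of_real (w x) * opmul I (opmul I (N x) \<sigma>) (adj (N x)) r c)) (adj R) r c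
      = (\<Sum>x\<in>X. opmul I (opmul I (opscale (complex_of_real (sqrt (w x))) (opmul I R (N x))) \<sigma>)
             (adj (opscale (complex_of_real (sqrt (w x))) (opmul I R (N x)))) r c)"
    unfolding mixture using summand by simp
qed

section \<open>Powers of a primitive d-th root of unity\<close>

text \<open>omega^m with the exponent m read modulo d, so that conjugation is negation of the exponent.\<close>

definition root_powi :: "complex \<Rightarrow> nat \<Rightarrow> int \<Rightarrow> complex" where
  "root_powi \<omega> d m = \<omega> ^ nat (m mod int d)"

locale qudit =
  fixes d :: nat and \<omega> :: complex and n :: nat
  assumes d_prime: "prime d" and omega_root: "\<omega> ^ d = 1"
    and omega_prim: "\<forall>j. 0 < j \<and> j < d \<longrightarrow> \<omega> ^ j \<noteq> 1"
begin

lemma d_pos: "d > 0"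
  using prime_gt_0_nat[OF d_prime] .

lemma omega_pow_mod: "\<omega> ^ (m mod d) = \<omega> ^ m"
proof -
  have "\<omega> ^ m = \<omega> ^ (m mod d) * (\<omega> ^ d) ^ (m div d)"
    by (metis mod_mult_div_eq power_add power_mult)
  then show ?thesis using omega_root by simp
qed

abbreviation W where "W \<equiv> root_powi \<omega> d"

lemma W_of_nat: "W (int m) = \<omega> ^ m"
  unfolding root_powi_def by (simp add: zmod_int[symmetric] omega_pow_mod del: of_nat_mod)

lemma W_cong: "[a = b] (mod int d) \<Longrightarrow> W a = W b"
  unfolding cong_def root_powi_def by simp

lemma W_0: "W 0 = 1"
  by (simp add: root_powi_def)

lemma W_add: "W (a + b) = W a * W b"
proof -
  have "W (a + b) = W (a mod d + b mod d)"
    by (rule W_cong) (simp add: cong_def mod_add_eq)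
  also have "a mod d + b mod d = int (nat (a mod d) + nat (b mod d))" using d_pos by simp
  also have "W \<dots> = \<omega> ^ (nat (a mod d) + nat (b mod d))" by (rule W_of_nat)
  also have "\<dots> = W a * W b" by (simp add: power_add root_powi_def)
  finally show ?thesis .
qed

lemma W_pow: "W (int q * m) = W m ^ q"
  by (induction q) (simp_all add: W_0 W_add algebra_simps)

lemma norm_omega: "cmod \<omega> = 1"
proof -
  have "cmod \<omega> ^ d = 1 ^ d" using omega_root by (metis norm_one norm_power power_one)
  then show ?thesis by (rule power_eq_imp_eq_base) (use d_pos in auto)
qed

lemma norm_W: "cmod (W m) = 1"
  by (simp add: root_powi_def norm_power norm_omega)

lemma W_cnj: "cnj (W m) = W (- m)"
proof -
  have "W m * cnj (W m) = 1" using complex_norm_square[of "W m"] norm_W by simp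
  moreover have "W m * W (- m) = 1" using W_add[of m "-m"] W_0 by simp
  ultimately show ?thesis by (metis mult.commute mult.left_commute mult.right_neutral)
qed

lemma W_neq_1: "x mod int d \<noteq> 0 \<Longrightarrow> W x \<noteq> 1"
proof -
  assume x: "x mod int d \<noteq> 0"
  have "0 \<le> x mod int d" "x mod int d < int d" using d_pos by simp_all
  then have "0 < nat (x mod int d)" "nat (x mod int d) < d" using x by linarith+
  then show ?thesis using omega_prim by (simp add: root_powi_def)
qed

lemma sum_W_mult: "(\<Sum>q<d. W (int q * m)) = (if m mod int d = 0 then of_nat d else 0)"
proof (cases "m mod int d = 0")
  case True
  then have "W m = 1" using W_0 W_cong[of m 0] by (simp add: cong_def)
  then show ?thesis using True by (simp add: W_pow)
next
  case False
  have "W m ^ d = W (int d * m)" by (simp add: W_pow)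
  also have "\<dots> = 1" using W_0 W_cong[of "int d * m" 0] by (simp add: cong_def)
  finally show ?thesis using False W_neq_1[OF False] by (simp add: W_pow geometric_sum)
qed

lemma int_mod_cong: "[int (x mod d) = int x] (mod int d)"
  by (simp add: cong_def zmod_int)

lemma int_diff_mod_eq_0_iff: "b < d \<Longrightarrow> b' < d \<Longrightarrow> (int b - int b') mod int d = 0 \<longleftrightarrow> b = b'"
  by (metis cong_iff_dvd_diff cong_int_iff cong_less_modulus_unique_nat dvd_eq_mod_eq_0 cong_refl)

end

section \<open>Generalized Pauli operators\<close>

lemma Xop_entry: "r < d \<Longrightarrow> c < d \<Longrightarrow> Xop d r c = (if (r + 1) mod d = c then 1 else 0)"
  by (auto simp: Xop_def mod_if split: if_splits)

context qudit
begin

abbreviation I where "I \<equiv> Fvec d n"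

definition N1_phase :: "nat \<Rightarrow> nat \<Rightarrow> complex" where
  "N1_phase a b = (if d = 2 then \<i> ^ (a * b) else 1)"

definition pauli_phase :: "(nat \<Rightarrow> nat) \<Rightarrow> complex" where
  "pauli_phase y = (\<Prod>i<n. N1_phase (y (2*i)) (y (2*i+1)))"

definition pauli_shift :: "(nat \<Rightarrow> nat) \<Rightarrow> (nat \<Rightarrow> nat) \<Rightarrow> (nat \<Rightarrow> nat)" where
  "pauli_shift y r = (\<lambda>i. (r i + y (2*i)) mod d)"

definition zdot :: "(nat \<Rightarrow> nat) \<Rightarrow> (nat \<Rightarrow> nat) \<Rightarrow> nat" where
  "zdot y c = (\<Sum>i<n. y (2*i+1) * c i)"

definition Nact :: "(nat \<Rightarrow> nat) \<Rightarrow> ((nat \<Rightarrow> nat) \<Rightarrow> complex) \<Rightarrow> ((nat \<Rightarrow> nat) \<Rightarrow> complex)" where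
  "Nact y v = opapp I (Pauli d \<omega> n y) v"

lemma norm_N1_phase: "cmod (N1_phase a b) = 1"
  by (simp add: N1_phase_def norm_power)

lemma norm_pauli_phase: "cmod (pauli_phase y) = 1"
  by (simp add: pauli_phase_def prod_norm[symmetric] norm_N1_phase)

lemma N1_phase_cnj: "N1_phase a b * cnj (N1_phase a b) = 1"
  using complex_norm_square[of "N1_phase a b"] norm_N1_phase by simp

lemma Xop_pow_entry: "r < d \<Longrightarrow> c < d \<Longrightarrow>
  oppow {..<d} (Xop d) a r c = (if (r + a) mod d = c then 1 else 0)"
proof (induction a arbitrary: r)
  case (Suc a)
  have "oppow {..<d} (Xop d) (Suc a) r c
      = (\<Sum>j<d. (if (r + 1) mod d = j then 1 else 0) * (if (j + a) mod d = c then 1 else 0))"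
    using Suc by (simp add: opmul_def Xop_entry)
  also have "\<dots> = (if ((r + 1) mod d + a) mod d = c then 1 else 0)"
    by (rule sum_delta_mult_left) (use d_pos in auto)
  also have "((r + 1) mod d + a) mod d = (r + Suc a) mod d" by (simp add: mod_add_left_eq)
  finally show ?case .
qed (simp add: opid_def)

lemma Zop_pow_entry: "r < d \<Longrightarrow> c < d \<Longrightarrow>
  oppow {..<d} (Zop d \<omega>) b r c = (if r = c then \<omega> ^ (b * c) else 0)"
proof (induction b arbitrary: r)
  case 0 then show ?case by (simp add: opid_def)
next
  case (Suc b)
  have "oppow {..<d} (Zop d \<omega>) (Suc b) r c
      = (\<Sum>j<d. (if r = j then 1 else 0) * (\<omega> ^ j * oppow {..<d} (Zop d \<omega>) b j c))"
    by (simp only: oppow.simps opmul_def Zop_def) (intro sum.cong refl, simp)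
  also have "\<dots> = \<omega> ^ r * oppow {..<d} (Zop d \<omega>) b r c"
    by (rule sum_delta_mult_left) (use Suc.prems in auto)
  also have "\<dots> = (if r = c then \<omega> ^ (Suc b * c) else 0)"
    using Suc by (simp add: power_add)
  finally show ?case .
qed

lemma N1_entry: "r < d \<Longrightarrow> c < d \<Longrightarrow>
  N1 d \<omega> a b r c = N1_phase a b * (if (r + a) mod d = c then \<omega> ^ (b * c) else 0)"
proof -
  assume r: "r < d" and c: "c < d"
  have "opmul {..<d} (oppow {..<d} (Xop d) a) (oppow {..<d} (Zop d \<omega>) b) r c
      = (\<Sum>j<d. (if (r + a) mod d = j then 1 else 0) * (if j = c then \<omega> ^ (b * c) else 0))"
    unfolding opmul_def using r c Xop_pow_entry Zop_pow_entry by (intro sum.cong refl) auto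
  also have "\<dots> = (if (r + a) mod d = c then \<omega> ^ (b * c) else 0)"
    by (rule sum_delta_mult_left) (use d_pos in auto)
  finally show ?thesis by (simp add: N1_def opscale_def N1_phase_def)
qed

lemma pauli_shift_in: "y \<in> Fvec d (2*n) \<Longrightarrow> r \<in> I \<Longrightarrow> pauli_shift y r \<in> I"
  using d_pos by (simp add: Fvec_def pauli_shift_def)

lemma Pauli_entry:
  assumes y: "y \<in> Fvec d (2*n)" and r: "r \<in> I" and c: "c \<in> I"
  shows "Pauli d \<omega> n y r c = (if c = pauli_shift y r then pauli_phase y * \<omega> ^ zdot y c else 0)"
proof -
  have rc: "r i < d" "c i < d" if "i < n" for i using r c that by (auto simp: Fvec_def)
  have "Pauli d \<omega> n y r c = (\<Prod>i<n. N1_phase (y (2*i)) (y (2*i+1)) *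
           (if (r i + y (2*i)) mod d = c i then \<omega> ^ (y (2*i+1) * c i) else 0))"
    unfolding Pauli_def using rc by (intro prod.cong refl) (simp add: N1_entry)
  also have "\<dots> = pauli_phase y * (\<Prod>i<n. if (r i + y (2*i)) mod d = c i then \<omega> ^ (y (2*i+1) * c i) else 0)"
    by (simp add: prod.distrib pauli_phase_def)
  also have "(\<Prod>i<n. if (r i + y (2*i)) mod d = c i then \<omega> ^ (y (2*i+1) * c i) else 0)
      = (if (\<forall>i<n. (r i + y (2*i)) mod d = c i) then (\<Prod>i<n. \<omega> ^ (y (2*i+1) * c i)) else 0)"
    by (rule prod_if_else_zero)
  also have "(\<Prod>i<n. \<omega> ^ (y (2*i+1) * c i)) = \<omega> ^ zdot y c"
    unfolding zdot_def by (rule power_sum[symmetric])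
  also have "(\<forall>i<n. (r i + y (2*i)) mod d = c i) = (c = pauli_shift y r)"
  proof
    assume "\<forall>i<n. (r i + y (2*i)) mod d = c i"
    then show "c = pauli_shift y r" using Fvec_eqI[OF c pauli_shift_in[OF y r]] by (simp add: pauli_shift_def)
  qed (simp add: pauli_shift_def)
  finally show ?thesis by simp
qed

lemma Nact_eq:
  assumes y: "y \<in> Fvec d (2*n)" and r: "r \<in> I"
  shows "Nact y v r = pauli_phase y * \<omega> ^ zdot y (pauli_shift y r) * v (pauli_shift y r)"
proof -
  have "Nact y v r = (\<Sum>c\<in>I. if c = pauli_shift y r then pauli_phase y * \<omega> ^ zdot y c * v c else 0)"
    unfolding Nact_def opapp_def by (intro sum.cong refl) (simp add: Pauli_entry[OF y r])
  then show ?thesis using pauli_shift_in[OF y r] by simp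
qed

lemma bij_betw_pauli_shift: assumes y: "y \<in> Fvec d (2*n)" shows "bij_betw (pauli_shift y) I I"
proof -
  have inj: "inj_on (pauli_shift y) I"
  proof (rule inj_onI)
    fix a b assume a: "a \<in> I" and b: "b \<in> I" and e: "pauli_shift y a = pauli_shift y b"
    have "\<forall>i<n. a i = b i"
    proof (intro allI impI)
      fix i assume i: "i < n"
      have ai: "a i < d" using a i unfolding Fvec_def by simp
      have bi: "b i < d" using b i unfolding Fvec_def by simp
      have "(y (2*i) + a i) mod d = (y (2*i) + b i) mod d"
        using fun_cong[OF e, of i] unfolding pauli_shift_def by (simp only: add.commute)
      then show "a i = b i" by (rule add_mod_left_inj[OF ai bi])
    qed
    then show "a = b" by (rule Fvec_eqI[OF a b])
  qed
  have sub: "pauli_shift y ` I \<subseteq> I" using pauli_shift_in[OF y] by blast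
  have "pauli_shift y ` I = I" by (rule endo_inj_surj[OF finite_Fvec sub inj])
  then show ?thesis using inj by (simp add: bij_betw_def)
qed

lemma pauli_shift_pauli_shift: "pauli_shift b (pauli_shift a r) = pauli_shift (vadd d a b) r"
  unfolding pauli_shift_def vadd_def by (rule ext) (simp add: mod_add_left_eq mod_add_right_eq add.assoc)

lemma Nact_cong: "(\<And>j. j \<in> I \<Longrightarrow> v j = w j) \<Longrightarrow> Nact y v r = Nact y w r"
  unfolding Nact_def by (rule opapp_cong)

lemma Nact_scale: "Nact y (\<lambda>j. c * v j) r = c * Nact y v r"
  unfolding Nact_def by (rule opapp_scale)

lemma Nact_unitary:
  assumes y: "y \<in> Fvec d (2*n)"
  shows "vinner I (Nact y u) (Nact y v) = vinner I u v"
proof -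
  have "vinner I (Nact y u) (Nact y v) = (\<Sum>r\<in>I. cnj (u (pauli_shift y r)) * v (pauli_shift y r))"
    unfolding vinner_def
  proof (rule sum.cong[OF refl])
    fix r assume r: "r \<in> I"
    define al where "al = pauli_phase y * \<omega> ^ zdot y (pauli_shift y r)"
    have n1: "cnj al * al = 1"
    proof -
      have "cmod al = 1" unfolding al_def by (simp add: norm_mult norm_pauli_phase norm_power norm_omega)
      then show ?thesis using complex_norm_square[of al] by (simp add: mult.commute)
    qed
    have "cnj (Nact y u r) * Nact y v r = cnj (al * u (pauli_shift y r)) * (al * v (pauli_shift y r))"
      by (simp only: Nact_eq[OF y r] al_def)
    also have "\<dots> = (cnj al * al) * (cnj (u (pauli_shift y r)) * v (pauli_shift y r))" by (simp only: complex_cnj_mult mult_ac)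
    finally show "cnj (Nact y u r) * Nact y v r = cnj (u (pauli_shift y r)) * v (pauli_shift y r)" by (simp only: n1 mult_1_left)
  qed
  also have "\<dots> = vinner I u v" unfolding vinner_def
    by (rule sum.reindex_bij_betw[OF bij_betw_pauli_shift[OF y], of "\<lambda>r. cnj (u r) * v r"])
  finally show ?thesis .
qed

lemma zdot_cong:
  assumes "\<forall>i<n. [int (y (2*i+1)) = Y i] (mod int d)" "\<forall>i<n. [int (c i) = C i] (mod int d)"
  shows "[int (zdot y c) = (\<Sum>i<n. Y i * C i)] (mod int d)"
  unfolding zdot_def of_nat_sum of_nat_mult
proof (rule cong_sum, rule cong_mult)
  fix i assume "i \<in> {..<n}"
  then have i: "i < n" by simp
  show "[int (y (2*i+1)) = Y i] (mod int d)" using assms(1) i by blast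
  show "[int (c i) = C i] (mod int d)" using assms(2) i by blast
qed

lemma sympl_cong:
  "[int (sympl d n a b) = (\<Sum>i<n. int (a (2*i)) * int (b (2*i+1)) - int (a (2*i+1)) * int (b (2*i)))] (mod int d)"
proof -
  let ?X = "(\<Sum>i<n. int (a (2*i)) * int (b (2*i+1)) - int (a (2*i+1)) * int (b (2*i)))"
  have "int (sympl d n a b) = ?X mod int d" unfolding sympl_def using d_pos by simp
  then show ?thesis by (simp add: cong_def)
qed

lemma int_add_mod_cong: "[int ((x + y) mod d) = int x + int y] (mod int d)"
  using int_mod_cong[of "x + y"] by simp

lemma int_add3_mod_cong: "[int ((x + y + z) mod d) = int x + int y + int z] (mod int d)"
  using int_mod_cong[of "x + y + z"] by simp

lemma pauli_shift_vadd: "pauli_shift (vadd d a b) r i = (r i + a (2*i) + b (2*i)) mod d"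
  unfolding pauli_shift_def vadd_def by (simp add: mod_add_right_eq add.assoc)

text \<open>The phase in N_a N_b = c N_(a+b): moving Z^(z_a) past X^(x_b) costs omega^(-z_a x_b) in each
qudit, and the normalising phases of N_a, N_b, N_(a+b) have to be compensated.\<close>

definition pauli_mult_phase :: "(nat \<Rightarrow> nat) \<Rightarrow> (nat \<Rightarrow> nat) \<Rightarrow> complex" where
  "pauli_mult_phase a b = pauli_phase a * pauli_phase b * cnj (pauli_phase (vadd d a b)) *
     W (- (\<Sum>i<n. int (a (2*i+1)) * int (b (2*i))))"

lemma norm_pauli_mult_phase: "cmod (pauli_mult_phase a b) = 1"
  by (simp add: pauli_mult_phase_def norm_mult norm_pauli_phase norm_W)

lemma Nact_Nact:
  assumes a: "a \<in> Fvec d (2*n)" and b: "b \<in> Fvec d (2*n)" and r: "r \<in> I"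
  shows "Nact a (Nact b v) r = pauli_mult_phase a b * Nact (vadd d a b) v r"
proof -
  define S where "S = pauli_shift (vadd d a b) r"
  have lhs: "Nact a (Nact b v) r
      = pauli_phase a * pauli_phase b * (\<omega> ^ zdot a (pauli_shift a r) * \<omega> ^ zdot b S) * v S"
    using Nact_eq[OF a r] Nact_eq[OF b pauli_shift_in[OF a r]]
    by (simp only: S_def pauli_shift_pauli_shift mult_ac)
  have rhs: "Nact (vadd d a b) v r = pauli_phase (vadd d a b) * \<omega> ^ zdot (vadd d a b) S * v S"
    unfolding S_def by (rule Nact_eq[OF vadd_in_Fvec[OF d_pos a b] r])
  define xa where "xa i = int (a (2*i))" for i
  define za where "za i = int (a (2*i+1))" for i
  define xb where "xb i = int (b (2*i))" for i
  define zb where "zb i = int (b (2*i+1))" for i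
  define ri where "ri i = int (r i)" for i
  have c1: "[int (zdot a (pauli_shift a r)) = (\<Sum>i<n. za i * (ri i + xa i))] (mod int d)"
    by (rule zdot_cong) (simp_all add: za_def ri_def xa_def pauli_shift_def int_add_mod_cong)
  have c2: "[int (zdot b S) = (\<Sum>i<n. zb i * (ri i + xa i + xb i))] (mod int d)"
    by (rule zdot_cong)
      (simp_all only: zb_def ri_def xa_def xb_def S_def pauli_shift_vadd int_add3_mod_cong cong_refl simp_thms)
  have c3: "[int (zdot (vadd d a b) S) = (\<Sum>i<n. (za i + zb i) * (ri i + xa i + xb i))] (mod int d)"
  proof (rule zdot_cong)
    have "vadd d a b (2*i+1) = (a (2*i+1) + b (2*i+1)) mod d" for i by (simp add: vadd_def)
    then show "\<forall>i<n. [int (vadd d a b (2*i+1)) = za i + zb i] (mod int d)"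
      by (simp only: za_def zb_def int_add_mod_cong simp_thms)
    show "\<forall>i<n. [int (S i) = ri i + xa i + xb i] (mod int d)"
      by (simp only: ri_def xa_def xb_def S_def pauli_shift_vadd int_add3_mod_cong simp_thms)
  qed
  have "(\<Sum>i<n. za i * (ri i + xa i)) + (\<Sum>i<n. zb i * (ri i + xa i + xb i))
      = - (\<Sum>i<n. za i * xb i) + (\<Sum>i<n. (za i + zb i) * (ri i + xa i + xb i))"
    unfolding sum.distrib[symmetric] sum_negf[symmetric] by (rule sum.cong) (simp_all add: algebra_simps)
  then have "[int (zdot a (pauli_shift a r)) + int (zdot b S)
      = - (\<Sum>i<n. za i * xb i) + int (zdot (vadd d a b) S)] (mod int d)"
    using cong_add[OF c1 c2] cong_add[OF cong_refl c3, of "- (\<Sum>i<n. za i * xb i)"]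
    by (simp add: cong_def)
  then have phase: "\<omega> ^ zdot a (pauli_shift a r) * \<omega> ^ zdot b S
      = W (- (\<Sum>i<n. za i * xb i)) * \<omega> ^ zdot (vadd d a b) S"
    unfolding W_of_nat[symmetric] W_add[symmetric] by (rule W_cong)
  have "cnj (pauli_phase (vadd d a b)) * pauli_phase (vadd d a b) = 1"
    using complex_norm_square[of "pauli_phase (vadd d a b)"] norm_pauli_phase by (simp add: mult.commute)
  then show ?thesis
    unfolding lhs rhs phase pauli_mult_phase_def za_def xb_def
    by (simp only: mult_ac) (simp add: mult.assoc[symmetric])
qed

lemma Nact_vadd:
  assumes "a \<in> Fvec d (2*n)" "b \<in> Fvec d (2*n)" "r \<in> I"
  shows "Nact (vadd d a b) v r = cnj (pauli_mult_phase a b) * Nact a (Nact b v) r"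
proof -
  have "cnj (pauli_mult_phase a b) * pauli_mult_phase a b = 1"
    using complex_norm_square[of "pauli_mult_phase a b"] norm_pauli_mult_phase by (simp add: mult.commute)
  then show ?thesis unfolding Nact_Nact[OF assms] by (simp add: mult.assoc[symmetric])
qed

lemma pauli_mult_phase_commute: "pauli_mult_phase a b = \<omega> ^ sympl d n a b * pauli_mult_phase b a"
proof -
  define xa where "xa i = int (a (2*i))" for i
  define za where "za i = int (a (2*i+1))" for i
  define xb where "xb i = int (b (2*i))" for i
  define zb where "zb i = int (b (2*i+1))" for i
  have "- (\<Sum>i<n. za i * xb i) = (\<Sum>i<n. xa i * zb i - za i * xb i) + - (\<Sum>i<n. zb i * xa i)"
    by (simp add: sum_subtractf mult.commute)
  moreover have "W (\<Sum>i<n. xa i * zb i - za i * xb i) = \<omega> ^ sympl d n a b"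
    unfolding W_of_nat[symmetric] xa_def za_def xb_def zb_def
    by (rule W_cong) (use sympl_cong[of a b] in \<open>simp add: cong_sym_eq\<close>)
  ultimately have "W (- (\<Sum>i<n. za i * xb i)) = \<omega> ^ sympl d n a b * W (- (\<Sum>i<n. zb i * xa i))"
    by (simp only: W_add)
  then show ?thesis
    unfolding pauli_mult_phase_def xa_def za_def xb_def zb_def by (simp add: vadd_commute[of d b a] mult_ac)
qed

lemma Nact_commute:
  assumes a: "a \<in> Fvec d (2*n)" and b: "b \<in> Fvec d (2*n)" and r: "r \<in> I"
  shows "Nact a (Nact b v) r = \<omega> ^ sympl d n a b * Nact b (Nact a v) r"
  unfolding Nact_Nact[OF a b r] Nact_Nact[OF b a r] pauli_mult_phase_commute[of a b]
  by (simp add: vadd_commute mult.assoc)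

lemma Nact_zero: "r \<in> I \<Longrightarrow> Nact (\<lambda>_. 0) v r = v r"
proof -
  assume r: "r \<in> I"
  have "pauli_shift (\<lambda>_. 0) r = r"
  proof
    fix i show "pauli_shift (\<lambda>_. 0) r i = r i"
      using r by (cases "i < n") (auto simp: pauli_shift_def Fvec_def)
  qed
  then show ?thesis
    using Nact_eq[OF zero_in_Fvec[OF d_pos] r, of v] by (simp add: pauli_phase_def N1_phase_def zdot_def)
qed

lemma N1_orthogonal:
  assumes a: "a < d" and b: "b < d" and a': "a' < d" and b': "b' < d"
  shows "(\<Sum>p<d. \<Sum>q<d. N1 d \<omega> p q a b * cnj (N1 d \<omega> p q a' b')) = (if a = a' \<and> b = b' then of_nat d else 0)"
proof -
  have entry: "N1 d \<omega> p q a b * cnj (N1 d \<omega> p q a' b')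
      = (if (a + p) mod d = b \<and> (a' + p) mod d = b' then W (int q * (int b - int b')) else 0)" for p q
  proof -
    have "\<omega> ^ (q * b) * cnj (\<omega> ^ (q * b')) = W (int q * (int b - int b'))"
      unfolding W_of_nat[symmetric] W_cnj W_add[symmetric] by (simp add: algebra_simps)
    then show ?thesis
      unfolding N1_entry[OF a b] N1_entry[OF a' b'] using N1_phase_cnj[of p q]
      by (simp add: mult_ac)
  qed
  have "(\<Sum>q<d. N1 d \<omega> p q a b * cnj (N1 d \<omega> p q a' b'))
      = (if (a + p) mod d = b \<and> (a' + p) mod d = b' then \<Sum>q<d. W (int q * (int b - int b')) else 0)" for p
    unfolding entry by (cases "(a + p) mod d = b \<and> (a' + p) mod d = b'") (auto intro: sum.neutral)
  then have "(\<Sum>q<d. N1 d \<omega> p q a b * cnj (N1 d \<omega> p q a' b'))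
      = (if (a + p) mod d = b \<and> (a' + p) mod d = b' \<and> b = b' then of_nat d else 0)" for p
    by (simp add: sum_W_mult int_diff_mod_eq_0_iff[OF b b'] W_0)
  then have "(\<Sum>p<d. \<Sum>q<d. N1 d \<omega> p q a b * cnj (N1 d \<omega> p q a' b'))
      = (\<Sum>p<d. (\<lambda>c. if c = b \<and> (a' + p) mod d = b \<and> b = b' then of_nat d else 0) ((a + p) mod d))"
    by (intro sum.cong) auto
  also have "\<dots> = (if a = a' \<and> b = b' then of_nat d else 0)"
  proof (cases "a = a' \<and> b = b'")
    case True
    have "(\<Sum>p<d. (\<lambda>c. if c = b then of_nat d else 0) ((a + p) mod d)) = (\<Sum>c<d. if c = b then (of_nat d :: complex) else 0)"
      by (rule sum_add_mod_shift[OF d_pos])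
    then show ?thesis using True b by simp
  next
    case False
    have "\<not> ((a + p) mod d = b \<and> (a' + p) mod d = b \<and> b = b')" for p
      using False add_mod_left_inj[OF a a', of p] by (auto simp: add.commute)
    then show ?thesis using False by (auto intro!: sum.neutral)
  qed
  finally show ?thesis .
qed

lemma Pauli_orthogonal:
  assumes r: "r \<in> I" and c: "c \<in> I" and r': "r' \<in> I" and c': "c' \<in> I"
  shows "(\<Sum>x\<in>Fvec d (2*n). Pauli d \<omega> n x r c * cnj (Pauli d \<omega> n x r' c'))
       = (if r = r' \<and> c = c' then of_nat d ^ n else 0)"
proof -
  have lt: "r i < d" "c i < d" "r' i < d" "c' i < d" if "i < n" for i
    using r c r' c' that unfolding Fvec_def by auto
  have "(\<Sum>x\<in>Fvec d (2*n). Pauli d \<omega> n x r c * cnj (Pauli d \<omega> n x r' c'))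
      = (\<Sum>x\<in>Fvec d (2*n). \<Prod>i<n. N1 d \<omega> (x (2*i)) (x (2*i+1)) (r i) (c i) *
                                   cnj (N1 d \<omega> (x (2*i)) (x (2*i+1)) (r' i) (c' i)))"
    unfolding Pauli_def cnj_prod prod.distrib by simp
  also have "\<dots> = (\<Prod>i<n. \<Sum>p<d. \<Sum>q<d. N1 d \<omega> p q (r i) (c i) * cnj (N1 d \<omega> p q (r' i) (c' i)))"
    by (rule sum_Fvec_pairs_prod)
  also have "\<dots> = (\<Prod>i<n. if r i = r' i \<and> c i = c' i then of_nat d else 0)"
    by (rule prod.cong[OF refl]) (simp add: N1_orthogonal lt)
  also have "\<dots> = (if \<forall>i<n. r i = r' i \<and> c i = c' i then \<Prod>i<n. of_nat d else 0)"
    by (rule prod_if_else_zero)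
  also have "(\<forall>i<n. r i = r' i \<and> c i = c' i) \<longleftrightarrow> r = r' \<and> c = c'"
  proof
    assume "\<forall>i<n. r i = r' i \<and> c i = c' i"
    then show "r = r' \<and> c = c'" using Fvec_eqI[OF r r'] Fvec_eqI[OF c c'] by blast
  qed simp
  finally show ?thesis by simp
qed

definition Npow_act :: "(nat \<Rightarrow> nat) \<Rightarrow> nat \<Rightarrow> ((nat \<Rightarrow> nat) \<Rightarrow> complex) \<Rightarrow> ((nat \<Rightarrow> nat) \<Rightarrow> complex)" where
  "Npow_act y m v = opapp I (oppow I (Pauli d \<omega> n y) m) v"

lemma Npow_act_Suc: "Npow_act y (Suc m) v = Nact y (Npow_act y m v)"
  by (rule ext) (simp only: Npow_act_def Nact_def oppow.simps opapp_opmul)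

lemma Npow_act_0: "r \<in> I \<Longrightarrow> Npow_act y 0 v r = v r"
  by (simp only: Npow_act_def oppow.simps opapp_opid[OF finite_Fvec])

lemma Npow_act_cong: "(\<And>j. j \<in> I \<Longrightarrow> v j = w j) \<Longrightarrow> Npow_act y m v r = Npow_act y m w r"
  unfolding Npow_act_def by (rule opapp_cong)

lemma Npow_act_scale: "Npow_act y m (\<lambda>j. c * v j) r = c * Npow_act y m v r"
  unfolding Npow_act_def by (rule opapp_scale)

lemma Nact_Npow_act_commute:
  assumes a: "a \<in> Fvec d (2*n)" and b: "b \<in> Fvec d (2*n)"
  shows "r \<in> I \<Longrightarrow> Nact a (Npow_act b m v) r = \<omega> ^ (m * sympl d n a b) * Npow_act b m (Nact a v) r"
proof (induction m arbitrary: r)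
  case 0
  have "Nact a (Npow_act b 0 v) r = Nact a v r" by (rule Nact_cong) (simp add: Npow_act_0)
  then show ?case using 0 by (simp add: Npow_act_0)
next
  case (Suc m)
  have "Nact a (Npow_act b (Suc m) v) r = \<omega> ^ sympl d n a b * Nact b (Nact a (Npow_act b m v)) r"
    unfolding Npow_act_Suc by (rule Nact_commute[OF a b Suc.prems])
  also have "Nact b (Nact a (Npow_act b m v)) r = Nact b (\<lambda>j. \<omega> ^ (m * sympl d n a b) * Npow_act b m (Nact a v) j) r"
    by (rule Nact_cong) (rule Suc.IH)
  also have "\<dots> = \<omega> ^ (m * sympl d n a b) * Npow_act b (Suc m) (Nact a v) r"
    unfolding Npow_act_Suc by (rule Nact_scale)
  finally show ?case by (simp add: power_add mult_ac)
qed

lemma Npow_act_unitary: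
  assumes y: "y \<in> Fvec d (2*n)"
  shows "vinner I (Npow_act y m u) (Npow_act y m v) = vinner I u v"
proof (induction m)
  case 0 then show ?case by (rule vinner_cong) (simp_all add: Npow_act_0)
next
  case (Suc m) then show ?case by (simp only: Npow_act_Suc Nact_unitary[OF y])
qed

lemma eigenvectors_orthogonal:
  assumes y: "y \<in> Fvec d (2*n)"
    and u: "\<And>r. r \<in> I \<Longrightarrow> Nact y u r = \<omega> ^ a * u r"
    and v: "\<And>r. r \<in> I \<Longrightarrow> Nact y v r = \<omega> ^ b * v r"
    and ne: "a mod d \<noteq> b mod d"
  shows "vinner I u v = 0"
proof -
  have "vinner I u v = vinner I (Nact y u) (Nact y v)" by (rule Nact_unitary[OF y, symmetric])
  also have "\<dots> = vinner I (\<lambda>r. \<omega> ^ a * u r) (\<lambda>r. \<omega> ^ b * v r)" by (rule vinner_cong) (simp_all add: u v)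
  also have "\<dots> = (cnj (\<omega> ^ a) * \<omega> ^ b) * vinner I u v"
    unfolding vinner_def by (simp add: sum_distrib_left mult_ac)
  also have "cnj (\<omega> ^ a) * \<omega> ^ b = W (int b - int a)"
    unfolding W_of_nat[symmetric] W_cnj W_add[symmetric] by simp
  finally have e: "vinner I u v = W (int b - int a) * vinner I u v" .
  have "(int b - int a) mod int d \<noteq> 0"
    using ne by (metis cong_iff_dvd_diff cong_int_iff cong_def dvd_eq_mod_eq_0)
  then have "W (int b - int a) \<noteq> 1" by (rule W_neq_1)
  then show ?thesis using e by (metis mult_cancel_right2)
qed

end

section \<open>The stabilizer code\<close>

locale stabilizer_code = qudit +
  fixes k :: nat and g h :: "nat \<Rightarrow> nat \<Rightarrow> nat" and \<psi>0 :: "(nat \<Rightarrow> nat) \<Rightarrow> complex"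
    and xhat :: "(nat \<Rightarrow> nat) \<Rightarrow> (nat \<Rightarrow> nat)" and s t :: "nat \<Rightarrow> nat"
    and L :: "(nat \<Rightarrow> nat) set"
  assumes k_le: "k \<le> n"
    and L_sub: "L \<subseteq> Fvec d (2*n)"
    and gh_vec: "\<forall>i<n. g i \<in> Fvec d (2*n) \<and> h i \<in> Fvec d (2*n)"
    and hyp_gh: "\<forall>i<n. \<forall>j<n. sympl d n (g i) (h j) = (if i = j then 1 else 0)"
    and L_span: "L = {lincomb d (n - k) c g | c. c \<in> Fvec d (n - k)}"
    and L_indep: "\<forall>c\<in>Fvec d (n - k). lincomb d (n - k) c g = (\<lambda>_. 0) \<longrightarrow> c = (\<lambda>_. 0)"
    and psi0_unit: "vinner (Fvec d n) \<psi>0 \<psi>0 = 1"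
    and psi0_stab: "\<forall>i<n. \<forall>r\<in>Fvec d n. opapp (Fvec d n) (Pauli d \<omega> n (g i)) \<psi>0 r = \<psi>0 r"
    and xhat_coset: "\<forall>t'\<in>Fvec d (n - k). xhat t' \<in> Fvec d (2*n) \<and>
                        (\<forall>i<n - k. sympl d n (g i) (xhat t') = t' i)"
    and s_vec: "s \<in> Fvec d (n - k)"
    and t_vec: "t \<in> Fvec d (n - k)"
begin

lemma g_in: "i < n \<Longrightarrow> g i \<in> Fvec d (2*n)"
  using gh_vec by blast

lemma h_in: "i < n \<Longrightarrow> h i \<in> Fvec d (2*n)"
  using gh_vec by blast

abbreviation ketbar where "ketbar \<equiv> ket d \<omega> n h \<psi>0"

definition partial_ket :: "(nat \<Rightarrow> nat) \<Rightarrow> nat list \<Rightarrow> (nat \<Rightarrow> nat) \<Rightarrow> complex" where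
  "partial_ket l js = opapp I (opprod I (map (\<lambda>i. oppow I (Pauli d \<omega> n (h i)) (l i)) js)) \<psi>0"

lemma partial_ket_Nil: "r \<in> I \<Longrightarrow> partial_ket l [] r = \<psi>0 r"
  unfolding partial_ket_def opprod_def by (simp add: opapp_opid)

lemma partial_ket_Cons: "partial_ket l (j # js) = Npow_act (h j) (l j) (partial_ket l js)"
  unfolding partial_ket_def Npow_act_def opprod_def
  by (rule ext) (simp only: list.map foldr_Cons o_apply opapp_opmul)

lemma ketbar_eq_partial_ket: "ketbar l = partial_ket l [0..<n]"
  unfolding ket_def partial_ket_def by simp

text \<open>Since <g_i, h_j> = delta_ij, N_(g_i) commutes with N_(h_j) for j /= i and with N_(h_i) up to
the factor omega; it fixes |0^n>.\<close>

lemma partial_ket_eigen: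
  assumes "distinct js" "set js \<subseteq> {..<n}" "i < n"
  shows "r \<in> I \<Longrightarrow> Nact (g i) (partial_ket l js) r = \<omega> ^ (if i \<in> set js then l i else 0) * partial_ket l js r"
  using assms(1,2)
proof (induction js arbitrary: r)
  case Nil
  have "Nact (g i) (partial_ket l []) r = Nact (g i) \<psi>0 r" by (rule Nact_cong) (simp add: partial_ket_Nil)
  also have "\<dots> = \<psi>0 r" using psi0_stab assms(3) Nil.prems(1) by (simp add: Nact_def)
  finally show ?case using Nil.prems(1) by (simp add: partial_ket_Nil)
next
  case (Cons j js)
  have j: "j < n" using Cons.prems by simp
  have IH: "\<And>r. r \<in> I \<Longrightarrow> Nact (g i) (partial_ket l js) r = \<omega> ^ (if i \<in> set js then l i else 0) * partial_ket l js r"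
    using Cons.IH Cons.prems by simp
  have "Nact (g i) (partial_ket l (j # js)) r
      = \<omega> ^ (l j * sympl d n (g i) (h j)) * Npow_act (h j) (l j) (Nact (g i) (partial_ket l js)) r"
    unfolding partial_ket_Cons by (rule Nact_Npow_act_commute[OF g_in[OF assms(3)] h_in[OF j] Cons.prems(1)])
  also have "Npow_act (h j) (l j) (Nact (g i) (partial_ket l js)) r
      = \<omega> ^ (if i \<in> set js then l i else 0) * partial_ket l (j # js) r"
    unfolding partial_ket_Cons Npow_act_scale[symmetric] by (rule Npow_act_cong) (rule IH)
  also have "sympl d n (g i) (h j) = (if i = j then 1 else 0)" using hyp_gh assms(3) j by blast
  finally show ?case using Cons.prems(2) by (auto simp: power_add)
qed

lemma ketbar_eigen: "i < n \<Longrightarrow> r \<in> I \<Longrightarrow> Nact (g i) (ketbar l) r = \<omega> ^ (l i) * ketbar l r"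
  unfolding ketbar_eq_partial_ket using partial_ket_eigen[of "[0..<n]" i r l] by (simp add: atLeast0LessThan)

lemma partial_ket_norm: "set js \<subseteq> {..<n} \<Longrightarrow> vinner I (partial_ket l js) (partial_ket l js) = 1"
proof (induction js)
  case Nil
  have "vinner I (partial_ket l []) (partial_ket l []) = vinner I \<psi>0 \<psi>0"
    by (rule vinner_cong) (simp_all add: partial_ket_Nil)
  then show ?case using psi0_unit by simp
next
  case (Cons j js)
  then show ?case by (simp add: partial_ket_Cons Npow_act_unitary[OF h_in])
qed

lemma ketbar_norm: "vinner I (ketbar l) (ketbar l) = 1"
  unfolding ketbar_eq_partial_ket by (rule partial_ket_norm) auto

lemma ketbar_orthonormal:
  assumes l: "l \<in> I" and l': "l' \<in> I"
  shows "vinner I (ketbar l) (ketbar l') = (if l = l' then 1 else 0)"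
proof (cases "l = l'")
  case False
  then obtain i where i: "i < n" "l i \<noteq> l' i" using Fvec_eqI[OF l l'] by blast
  have "l i < d" "l' i < d" using l l' i unfolding Fvec_def by auto
  then have ne: "l i mod d \<noteq> l' i mod d" using i by simp
  have "vinner I (ketbar l) (ketbar l') = 0"
    by (rule eigenvectors_orthogonal[OF g_in[OF i(1)] _ _ ne]) (simp_all add: ketbar_eigen[OF i(1)])
  then show ?thesis using False by simp
qed (simp add: ketbar_norm)

lemma ketbar_resolution_of_identity:
  "r \<in> I \<Longrightarrow> c \<in> I \<Longrightarrow> (\<Sum>l\<in>I. ketbar l r * cnj (ketbar l c)) = (if r = c then 1 else 0)"
  by (rule orthonormal_resolution_of_identity[OF finite_Fvec]) (simp_all add: ketbar_orthonormal[unfolded vinner_def])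

lemma ketbar_parseval: "(\<Sum>l\<in>I. vinner I (ketbar l) w * cnj (vinner I (ketbar l) w)) = vinner I w w"
proof -
  have "(\<Sum>l\<in>I. vinner I (ketbar l) w * cnj (vinner I (ketbar l) w))
      = (\<Sum>l\<in>I. \<Sum>r\<in>I. \<Sum>c\<in>I. (cnj (ketbar l r) * w r) * (ketbar l c * cnj (w c)))"
    by (simp only: vinner_def cnj_sum complex_cnj_mult complex_cnj_cnj sum_product)
  also have "\<dots> = (\<Sum>r\<in>I. \<Sum>c\<in>I. \<Sum>l\<in>I. (cnj (ketbar l r) * w r) * (ketbar l c * cnj (w c)))"
    by (subst sum.swap) (rule sum.cong[OF refl], rule sum.swap)
  also have "\<dots> = (\<Sum>r\<in>I. \<Sum>c\<in>I. (w r * cnj (w c)) * (\<Sum>l\<in>I. ketbar l c * cnj (ketbar l r)))"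
    by (simp only: sum_distrib_left mult_ac)
  also have "\<dots> = (\<Sum>r\<in>I. \<Sum>c\<in>I. (w r * cnj (w c)) * (if c = r then 1 else 0))"
    by (intro sum.cong refl) (simp only: ketbar_resolution_of_identity)
  also have "\<dots> = vinner I w w"
    unfolding vinner_def by (intro sum.cong refl) (simp add: sum_delta_mult_right mult.commute)
  finally show ?thesis .
qed

lemma ketbar_syndrome:
  assumes x: "x \<in> Fvec d (2*n)" and l: "l \<in> I" and l': "l' \<in> I"
    and nz: "vinner I (ketbar l') (Nact x (ketbar l)) \<noteq> 0" and i: "i < n"
  shows "l' i = (l i + sympl d n (g i) x) mod d"
proof -
  have eigen: "Nact (g i) (Nact x (ketbar l)) r = \<omega> ^ (l i + sympl d n (g i) x) * Nact x (ketbar l) r"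
    if r: "r \<in> I" for r
  proof -
    have "Nact (g i) (Nact x (ketbar l)) r = \<omega> ^ sympl d n (g i) x * Nact x (Nact (g i) (ketbar l)) r"
      by (rule Nact_commute[OF g_in[OF i] x r])
    also have "Nact x (Nact (g i) (ketbar l)) r = \<omega> ^ (l i) * Nact x (ketbar l) r"
      unfolding Nact_scale[symmetric] by (rule Nact_cong) (rule ketbar_eigen[OF i])
    finally show ?thesis by (simp add: power_add mult_ac)
  qed
  have "l' i mod d = (l i + sympl d n (g i) x) mod d"
  proof (rule ccontr)
    assume ne: "l' i mod d \<noteq> (l i + sympl d n (g i) x) mod d"
    have "vinner I (ketbar l') (Nact x (ketbar l)) = 0"
      by (rule eigenvectors_orthogonal[OF g_in[OF i] _ _ ne]) (simp_all add: ketbar_eigen[OF i] eigen)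
    then show False using nz by simp
  qed
  moreover have "l' i < d" using l' i unfolding Fvec_def by simp
  ultimately show ?thesis by simp
qed

abbreviation Fk where "Fk \<equiv> Fvec d k"

text \<open>src u and dst u are the labels (s,u) and (t+s,u) of the basis vectors of C(s) and C(t+s).\<close>

abbreviation src where "src u \<equiv> catv (n - k) s u"

abbreviation dst where "dst u \<equiv> catv (n - k) (vadd d t s) u"

abbreviation xh where "xh \<equiv> xhat t"

definition amp :: "(nat \<Rightarrow> nat) \<Rightarrow> (nat \<Rightarrow> nat) \<Rightarrow> (nat \<Rightarrow> nat) \<Rightarrow> complex" where
  "amp x u' u = vinner I (ketbar (dst u')) (Nact x (ketbar (src u)))"

definition fid_amp :: "(nat \<Rightarrow> nat) \<Rightarrow> complex" where
  "fid_amp x = tr I (opmul I (opscale (1 / of_nat (d ^ k)) (codeproj d \<omega> n k h \<psi>0 s))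
                      (opmul I (Rop d \<omega> n k h \<psi>0 xhat s t) (Pauli d \<omega> n x)))"

lemma catv_in_I: "s' \<in> Fvec d (n - k) \<Longrightarrow> u \<in> Fk \<Longrightarrow> catv (n - k) s' u \<in> I"
  using catv_in_Fvec[of s' d "n - k" u k] k_le by simp

lemma ts_in: "vadd d t s \<in> Fvec d (n - k)"
  by (rule vadd_in_Fvec[OF d_pos t_vec s_vec])

lemma xh_in: "xh \<in> Fvec d (2*n)"
  using xhat_coset t_vec by blast

lemma xh_syndrome: "i < n - k \<Longrightarrow> sympl d n (g i) xh = t i"
  using xhat_coset t_vec by blast

lemma fid_amp_eq: "fid_amp x = 1 / of_nat (d ^ k) * (\<Sum>u\<in>Fk. \<Sum>u'\<in>Fk. cnj (amp xh u' u) * amp x u' u)"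
proof -
  let ?M = "opmul I (Rop d \<omega> n k h \<psi>0 xhat s t) (Pauli d \<omega> n x)"
  have M: "opapp I ?M v
      = opapp I (adj (Pauli d \<omega> n xh)) (opapp I (codeproj d \<omega> n k h \<psi>0 (vadd d t s)) (Nact x v))" for v
    by (rule ext) (simp only: opapp_opmul Rop_def Nact_def)
  have P: "opapp I (codeproj d \<omega> n k h \<psi>0 (vadd d t s)) w
      = (\<lambda>r. \<Sum>u'\<in>Fk. ketbar (dst u') r * vinner I (ketbar (dst u')) w)" for w
    by (rule ext) (simp only: codeproj_def opapp_ketbra_sum)
  have "vinner I (ketbar (src u)) (opapp I ?M (ketbar (src u)))
      = (\<Sum>u'\<in>Fk. cnj (amp xh u' u) * amp x u' u)" for u
  proof -
    have "vinner I (ketbar (src u)) (opapp I ?M (ketbar (src u)))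
        = vinner I (Nact xh (ketbar (src u)))
            (\<lambda>r. \<Sum>u'\<in>Fk. ketbar (dst u') r * vinner I (ketbar (dst u')) (Nact x (ketbar (src u))))"
      by (simp only: M vinner_adj P Nact_def[symmetric])
    also have "\<dots> = (\<Sum>u'\<in>Fk. cnj (amp xh u' u) * amp x u' u)"
      unfolding vinner_sum_right amp_def
      by (simp only: vinner_cnj_commute[of I "Nact xh (ketbar (src u))"] mult.commute)
    finally show ?thesis .
  qed
  then show ?thesis
    unfolding fid_amp_def by (simp only: tr_opmul_opscale_left codeproj_def tr_ketbra_sum)
qed

lemma ketbar_Pauli_orthogonal:
  assumes p: "p \<in> I" and p': "p' \<in> I" and q: "q \<in> I" and q': "q' \<in> I"
  shows "(\<Sum>x\<in>Fvec d (2*n). vinner I (ketbar p') (Nact x (ketbar p)) * cnj (vinner I (ketbar q') (Nact x (ketbar q))))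
       = of_nat d ^ n * (if p = q \<and> p' = q' then 1 else 0)"
proof -
  have expand: "vinner I (ketbar a') (Nact x (ketbar a))
      = (\<Sum>(r, c)\<in>I \<times> I. (cnj (ketbar a' r) * ketbar a c) * Pauli d \<omega> n x r c)" for a a' x
    by (simp only: vinner_def Nact_def opapp_def sum_distrib_left sum.cartesian_product mult_ac)
  have "(\<Sum>x\<in>Fvec d (2*n). vinner I (ketbar p') (Nact x (ketbar p)) * cnj (vinner I (ketbar q') (Nact x (ketbar q))))
      = of_nat d ^ n * (\<Sum>(r, c)\<in>I \<times> I. (cnj (ketbar p' r) * ketbar p c) * cnj (cnj (ketbar q' r) * ketbar q c))"
    unfolding expand split_def
    by (rule sum_orthogonal_expansion) (auto simp: Pauli_orthogonal prod_eq_iff)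
  also have "(\<Sum>(r, c)\<in>I \<times> I. (cnj (ketbar p' r) * ketbar p c) * cnj (cnj (ketbar q' r) * ketbar q c))
      = vinner I (ketbar p') (ketbar q') * vinner I (ketbar q) (ketbar p)"
    by (simp only: vinner_def sum_product sum.cartesian_product[symmetric] complex_cnj_mult complex_cnj_cnj mult_ac)
      (rule sum.swap)
  also have "\<dots> = (if p = q \<and> p' = q' then 1 else 0)"
    using ketbar_orthonormal p p' q q' by auto
  finally show ?thesis .
qed

lemma amp_orthogonal:
  assumes "u \<in> Fk" "u' \<in> Fk" "v \<in> Fk" "v' \<in> Fk"
  shows "(\<Sum>x\<in>Fvec d (2*n). amp x u' u * cnj (amp x v' v)) = (if (u, u') = (v, v') then of_nat d ^ n else 0)"
  unfolding amp_def
  using ketbar_Pauli_orthogonal[OF catv_in_I[OF s_vec] catv_in_I[OF ts_in] catv_in_I[OF s_vec] catv_in_I[OF ts_in]]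
    inj_on_eq_iff[OF inj_on_catv] assms
  by simp

lemma sum_fid_amp_sq_eq:
  "(\<Sum>x\<in>Fvec d (2*n). fid_amp x * cnj (fid_amp x))
     = (1 / of_nat (d ^ k))^2 * of_nat d ^ n * (\<Sum>u\<in>Fk. \<Sum>u'\<in>Fk. amp xh u' u * cnj (amp xh u' u))"
proof -
  define c :: complex where "c = 1 / of_nat (d ^ k)"
  define S where "S x = (\<Sum>j\<in>Fk \<times> Fk. cnj (amp xh (snd j) (fst j)) * amp x (snd j) (fst j))" for x
  have fid_amp_S: "fid_amp x = c * S x" for x
    unfolding fid_amp_eq c_def S_def by (simp add: sum.cartesian_product split_def)
  have "(\<Sum>x\<in>Fvec d (2*n). fid_amp x * cnj (fid_amp x)) = c * c * (\<Sum>x\<in>Fvec d (2*n). S x * cnj (S x))"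
    unfolding fid_amp_S by (simp add: c_def sum_distrib_left mult_ac)
  also have "(\<Sum>x\<in>Fvec d (2*n). S x * cnj (S x))
      = of_nat d ^ n * (\<Sum>j\<in>Fk \<times> Fk. cnj (amp xh (snd j) (fst j)) * cnj (cnj (amp xh (snd j) (fst j))))"
    unfolding S_def
    by (rule sum_orthogonal_expansion) (auto simp: amp_orthogonal prod_eq_iff)
  also have "(\<Sum>j\<in>Fk \<times> Fk. cnj (amp xh (snd j) (fst j)) * cnj (cnj (amp xh (snd j) (fst j))))
      = (\<Sum>u\<in>Fk. \<Sum>u'\<in>Fk. amp xh u' u * cnj (amp xh u' u))"
    by (simp add: sum.cartesian_product split_def mult.commute)
  finally show ?thesis unfolding c_def by (simp add: power2_eq_square mult_ac)
qed

lemma dst_surj: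
  assumes l: "l \<in> I" and e: "\<forall>i<n - k. l i = vadd d t s i"
  shows "l \<in> dst ` Fk"
proof
  define u where "u j = l (j + (n - k))" for j
  show "u \<in> Fk"
    using l k_le unfolding u_def Fvec_def by auto
  show "l = dst u"
  proof
    fix i show "l i = dst u i"
      using e by (cases "i < n - k") (auto simp: catv_def u_def)
  qed
qed

text \<open>N_xhat(t) maps the unit vector |(s,u)> to a unit vector of syndrome t+s, i.e. into C(t+s), so
its coordinates in the basis of C(t+s) have norm 1.\<close>

lemma amp_xh_column: "u \<in> Fk \<Longrightarrow> (\<Sum>u'\<in>Fk. amp xh u' u * cnj (amp xh u' u)) = 1"
proof -
  assume u: "u \<in> Fk"
  define w where "w = Nact xh (ketbar (src u))"
  have zero: "vinner I (ketbar l) w * cnj (vinner I (ketbar l) w) = 0" if l: "l \<in> I - dst ` Fk" for l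
  proof (rule ccontr)
    assume "vinner I (ketbar l) w * cnj (vinner I (ketbar l) w) \<noteq> 0"
    then have nz: "vinner I (ketbar l) (Nact xh (ketbar (src u))) \<noteq> 0" unfolding w_def by auto
    have "l i = vadd d t s i" if i: "i < n - k" for i
    proof -
      have "l i = (src u i + sympl d n (g i) xh) mod d"
        using ketbar_syndrome[OF xh_in catv_in_I[OF s_vec u] _ nz] l i by simp
      also have "\<dots> = vadd d t s i"
        using i xh_syndrome[OF i] by (simp add: catv_def vadd_def add.commute)
      finally show ?thesis .
    qed
    then have "l \<in> dst ` Fk" using l dst_surj by blast
    then show False using l by simp
  qed
  have "(1::complex) = vinner I w w"
    unfolding w_def by (simp add: Nact_unitary[OF xh_in] ketbar_norm)
  also have "\<dots> = (\<Sum>l\<in>I. vinner I (ketbar l) w * cnj (vinner I (ketbar l) w))"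
    by (rule ketbar_parseval[symmetric])
  also have "\<dots> = (\<Sum>l\<in>dst ` Fk. vinner I (ketbar l) w * cnj (vinner I (ketbar l) w))"
    by (rule sum.mono_neutral_right) (use zero catv_in_I[OF ts_in] in auto)
  also have "\<dots> = (\<Sum>u'\<in>Fk. amp xh u' u * cnj (amp xh u' u))"
    unfolding amp_def w_def by (rule sum.reindex[OF inj_on_catv, unfolded comp_def])
  finally show ?thesis by simp
qed

lemma sum_fid_amp_sq: "(\<Sum>x\<in>Fvec d (2*n). fid_amp x * cnj (fid_amp x)) = of_nat (d ^ (n - k))"
proof -
  have dz: "(of_nat d :: complex) \<noteq> 0" using d_pos by simp
  have "(\<Sum>u\<in>Fk. \<Sum>u'\<in>Fk. amp xh u' u * cnj (amp xh u' u)) = of_nat (d ^ k)"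
    by (simp add: amp_xh_column card_Fvec)
  then have "(\<Sum>x\<in>Fvec d (2*n). fid_amp x * cnj (fid_amp x)) = (1 / of_nat d ^ k)^2 * of_nat d ^ n * of_nat d ^ k"
    by (simp only: sum_fid_amp_sq_eq of_nat_power)
  also have "\<dots> = of_nat d ^ (n - k)"
    using dz k_le by (simp add: power2_eq_square field_simps power_diff)
  finally show ?thesis by simp
qed

definition phase_diagonal :: "(nat \<Rightarrow> nat) \<Rightarrow> ((nat \<Rightarrow> nat) \<Rightarrow> nat) \<Rightarrow> bool" where
  "phase_diagonal y f \<longleftrightarrow>
     (\<exists>q. cmod q = 1 \<and> (\<forall>l. \<forall>r\<in>I. Nact y (ketbar l) r = q * \<omega> ^ f l * ketbar l r))"

lemma phase_diagonal_zero: "phase_diagonal (\<lambda>_. 0) (\<lambda>_. 0)"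
  unfolding phase_diagonal_def by (rule exI[of _ 1]) (simp add: Nact_zero)

lemma phase_diagonal_gen: "i < n \<Longrightarrow> phase_diagonal (g i) (\<lambda>l. l i)"
  unfolding phase_diagonal_def by (rule exI[of _ 1]) (simp add: ketbar_eigen)

lemma phase_diagonal_vadd:
  assumes a: "a \<in> Fvec d (2*n)" and b: "b \<in> Fvec d (2*n)"
    and "phase_diagonal a fa" "phase_diagonal b fb"
  shows "phase_diagonal (vadd d a b) (\<lambda>l. fa l + fb l)"
proof -
  obtain p q where p: "cmod p = 1" and q: "cmod q = 1"
    and pa: "\<And>l r. r \<in> I \<Longrightarrow> Nact a (ketbar l) r = p * \<omega> ^ fa l * ketbar l r"
    and qb: "\<And>l r. r \<in> I \<Longrightarrow> Nact b (ketbar l) r = q * \<omega> ^ fb l * ketbar l r"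
    using assms(3,4) unfolding phase_diagonal_def by blast
  have "Nact (vadd d a b) (ketbar l) r = (cnj (pauli_mult_phase a b) * q * p) * \<omega> ^ (fa l + fb l) * ketbar l r"
    if r: "r \<in> I" for l r
  proof -
    have "Nact (vadd d a b) (ketbar l) r = cnj (pauli_mult_phase a b) * Nact a (Nact b (ketbar l)) r"
      by (rule Nact_vadd[OF a b r])
    also have "Nact a (Nact b (ketbar l)) r = q * \<omega> ^ fb l * Nact a (ketbar l) r"
      unfolding Nact_scale[symmetric] by (rule Nact_cong) (rule qb)
    finally show ?thesis using pa[OF r] by (simp add: power_add mult_ac)
  qed
  moreover have "cmod (cnj (pauli_mult_phase a b) * q * p) = 1"
    by (simp add: norm_mult p q norm_pauli_mult_phase)
  ultimately show ?thesis unfolding phase_diagonal_def by blast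
qed

lemma gen_smul_in: "j < n \<Longrightarrow> (\<lambda>i. (e * g j i) mod d) \<in> Fvec d (2*n)"
  using g_in[of j] d_pos by (simp add: Fvec_def)

lemma gen_smul_Suc: "(\<lambda>i. (Suc e * g j i) mod d) = vadd d (\<lambda>i. (e * g j i) mod d) (g j)"
proof
  fix i
  have "(Suc e * g j i) mod d = (e * g j i + g j i) mod d" by (simp add: add.commute)
  then show "(Suc e * g j i) mod d = vadd d (\<lambda>i. (e * g j i) mod d) (g j) i"
    unfolding vadd_def by (simp only: mod_add_left_eq)
qed

lemma phase_diagonal_gen_smul: "j < n \<Longrightarrow> phase_diagonal (\<lambda>i. (e * g j i) mod d) (\<lambda>l. e * l j)"
proof (induction e)
  case 0
  then show ?case using phase_diagonal_zero by simp
next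
  case (Suc e)
  show ?case
    unfolding gen_smul_Suc
    using phase_diagonal_vadd[OF gen_smul_in[OF Suc.prems] g_in[OF Suc.prems] Suc.IH[OF Suc.prems]
        phase_diagonal_gen[OF Suc.prems]]
    by (simp add: add.commute)
qed

lemma lincomb_in: "m \<le> n \<Longrightarrow> lincomb d m c g \<in> Fvec d (2*n)"
  using g_in d_pos by (auto simp: Fvec_def lincomb_def)

lemma lincomb_Suc: "lincomb d (Suc m) c g = vadd d (lincomb d m c g) (\<lambda>i. (c m * g m i) mod d)"
  unfolding lincomb_def vadd_def by (rule ext) (simp add: mod_add_eq)

lemma phase_diagonal_lincomb: "m \<le> n \<Longrightarrow> phase_diagonal (lincomb d m c g) (\<lambda>l. \<Sum>j<m. c j * l j)"
proof (induction m)
  case 0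
  then show ?case using phase_diagonal_zero by (simp add: lincomb_def)
next
  case (Suc m)
  then have m: "m < n" by simp
  show ?case
    using phase_diagonal_vadd[OF lincomb_in gen_smul_in[OF m] Suc.IH phase_diagonal_gen_smul[OF m]] m
    by (simp add: lincomb_Suc)
qed

text \<open>y = sum_j c_j g_j multiplies |l> by a unimodular constant times omega^(sum_j c_j l_j), and
l_j = s_j for j < n-k on C(s).\<close>

lemma Nact_L_on_code:
  assumes y: "y \<in> L"
  shows "\<exists>\<zeta>. cmod \<zeta> = 1 \<and> (\<forall>u\<in>Fk. \<forall>r\<in>I. Nact y (ketbar (src u)) r = \<zeta> * ketbar (src u) r)"
proof -
  obtain c where y_eq: "y = lincomb d (n - k) c g" using y L_span by blast
  obtain p where p: "cmod p = 1"
    and pe: "\<And>l r. r \<in> I \<Longrightarrow> Nact y (ketbar l) r = p * \<omega> ^ (\<Sum>j<n - k. c j * l j) * ketbar l r"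
    using phase_diagonal_lincomb[of "n - k" c] unfolding y_eq phase_diagonal_def by auto
  have "(\<Sum>j<n - k. c j * src u j) = (\<Sum>j<n - k. c j * s j)" for u
    by (rule sum.cong) (simp_all add: catv_def)
  then have "\<forall>u\<in>Fk. \<forall>r\<in>I. Nact y (ketbar (src u)) r = (p * \<omega> ^ (\<Sum>j<n - k. c j * s j)) * ketbar (src u) r"
    using pe by simp
  moreover have "cmod (p * \<omega> ^ (\<Sum>j<n - k. c j * s j)) = 1"
    by (simp add: norm_mult p norm_power norm_omega)
  ultimately show ?thesis by blast
qed

lemma fid_amp_coset:
  assumes y: "y \<in> L"
  shows "fid_amp (vadd d xh y) * cnj (fid_amp (vadd d xh y)) = 1"
proof -
  have yF: "y \<in> Fvec d (2*n)" using y L_sub by blast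
  obtain \<zeta> where \<zeta>: "cmod \<zeta> = 1"
    and y_on_code: "\<And>u r. u \<in> Fk \<Longrightarrow> r \<in> I \<Longrightarrow> Nact y (ketbar (src u)) r = \<zeta> * ketbar (src u) r"
    using Nact_L_on_code[OF y] by blast
  define \<mu> where "\<mu> = cnj (pauli_mult_phase xh y) * \<zeta>"
  have \<mu>: "cmod \<mu> = 1" unfolding \<mu>_def by (simp add: norm_mult \<zeta> norm_pauli_mult_phase)
  have amp_coset: "amp (vadd d xh y) u' u = \<mu> * amp xh u' u" if u: "u \<in> Fk" for u u'
  proof -
    have "Nact (vadd d xh y) (ketbar (src u)) r = \<mu> * Nact xh (ketbar (src u)) r" if r: "r \<in> I" for r
    proof -
      have "Nact (vadd d xh y) (ketbar (src u)) r = cnj (pauli_mult_phase xh y) * Nact xh (Nact y (ketbar (src u))) r"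
        by (rule Nact_vadd[OF xh_in yF r])
      also have "Nact xh (Nact y (ketbar (src u))) r = \<zeta> * Nact xh (ketbar (src u)) r"
        unfolding Nact_scale[symmetric] by (rule Nact_cong) (rule y_on_code[OF u])
      finally show ?thesis unfolding \<mu>_def by (simp add: mult_ac)
    qed
    then have "amp (vadd d xh y) u' u = vinner I (ketbar (dst u')) (\<lambda>r. \<mu> * Nact xh (ketbar (src u)) r)"
      unfolding amp_def by (intro vinner_cong) simp_all
    then show ?thesis unfolding amp_def by (simp add: vinner_scale_right)
  qed
  have "fid_amp (vadd d xh y) = 1 / of_nat (d ^ k) * (\<mu> * (\<Sum>u\<in>Fk. \<Sum>u'\<in>Fk. amp xh u' u * cnj (amp xh u' u)))"
    unfolding fid_amp_eq by (simp add: amp_coset sum_distrib_left mult_ac)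
  also have "\<dots> = \<mu>"
    using d_pos by (simp add: amp_xh_column card_Fvec)
  finally show ?thesis using complex_norm_square[of \<mu>] \<mu> by simp
qed

lemma lincomb_inj:
  assumes c: "c \<in> Fvec d (n - k)" and c': "c' \<in> Fvec d (n - k)"
    and eq: "lincomb d (n - k) c g = lincomb d (n - k) c' g"
  shows "c = c'"
proof -
  define m where "m = n - k"
  define e where "e j = (c j + (d - c' j)) mod d" for j
  have cd: "c j < d" "c' j < d" if "j < m" for j using c c' that unfolding m_def Fvec_def by auto
  have e_in: "e \<in> Fvec d m" using c c' d_pos unfolding e_def m_def Fvec_def by auto
  have "lincomb d m e g = (\<lambda>_. 0)"
  proof
    fix i
    have "[int (\<Sum>j<m. e j * g j i) = (\<Sum>j<m. (int (c j) - int (c' j)) * int (g j i))] (mod int d)"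
      unfolding of_nat_sum of_nat_mult e_def by (rule cong_sum) (simp add: mod_diff_cong cd cong_mult)
    also have "(\<Sum>j<m. (int (c j) - int (c' j)) * int (g j i)) = int (\<Sum>j<m. c j * g j i) - int (\<Sum>j<m. c' j * g j i)"
      by (simp add: sum_subtractf left_diff_distrib)
    also have "[\<dots> = 0] (mod int d)"
    proof -
      have "[int (\<Sum>j<m. c j * g j i) = int (\<Sum>j<m. c' j * g j i)] (mod int d)"
        unfolding cong_int_iff unfolding cong_def using fun_cong[OF eq, of i] unfolding lincomb_def m_def .
      then show ?thesis by (simp only: cong_iff_dvd_diff diff_0_right)
    qed
    finally show "lincomb d m e g i = 0"
      unfolding lincomb_def cong_def by (simp add: zmod_int[symmetric] del: of_nat_sum)
  qed
  then have "e = (\<lambda>_. 0)" using L_indep e_in unfolding m_def by blast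
  then have "\<forall>j<m. c j = c' j" using cd mod_diff_eq_0_iff unfolding e_def by metis
  then show ?thesis using Fvec_eqI[OF c c'] unfolding m_def by blast
qed

lemma card_coset: "card (vadd d xh ` L) = d ^ (n - k)"
proof -
  have "inj_on (vadd d xh) L"
  proof (rule inj_onI)
    fix a b assume a: "a \<in> L" and b: "b \<in> L" and eq: "vadd d xh a = vadd d xh b"
    have aF: "a \<in> Fvec d (2*n)" and bF: "b \<in> Fvec d (2*n)" using a b L_sub by auto
    have "a i = b i" if "i < 2*n" for i
      using aF bF that fun_cong[OF eq, of i] add_mod_left_inj[of "a i" d "b i"]
      by (auto simp: Fvec_def vadd_def)
    then show "a = b" using Fvec_eqI[OF aF bF] by blast
  qed
  moreover have "L = (\<lambda>c. lincomb d (n - k) c g) ` Fvec d (n - k)" using L_span by blast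
  moreover have "inj_on (\<lambda>c. lincomb d (n - k) c g) (Fvec d (n - k))"
    by (rule inj_onI) (rule lincomb_inj)
  ultimately show ?thesis by (simp add: card_image card_Fvec)
qed

lemma coset_subset: "vadd d xh ` L \<subseteq> Fvec d (2*n)"
  using vadd_in_Fvec[OF d_pos xh_in] L_sub by blast

text \<open>|f|^2 = 1 on the coset, which has d^(n-k) points, and sum_x |f(x)|^2 = d^(n-k): no weight is
left for the other points.\<close>

lemma fid_amp_sq:
  assumes x: "x \<in> Fvec d (2*n)"
  shows "(cmod (fid_amp x))^2 = (if x \<in> vadd d xh ` L then 1 else 0)"
proof -
  let ?Q = "vadd d xh ` L"
  let ?F = "Fvec d (2*n)"
  define ff where "ff x = (cmod (fid_amp x))^2" for x
  have ff_complex: "complex_of_real (ff x) = fid_amp x * cnj (fid_amp x)" for x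
    unfolding ff_def by (rule complex_norm_square)
  have on_coset: "ff x = 1" if "x \<in> ?Q" for x
    using that fid_amp_coset ff_complex by (metis imageE of_real_eq_1_iff)
  have "complex_of_real (\<Sum>x\<in>?F. ff x) = complex_of_real (real (d ^ (n - k)))"
    by (simp only: of_real_sum ff_complex sum_fid_amp_sq of_real_of_nat_eq)
  moreover have "(\<Sum>x\<in>?Q. ff x) = real (d ^ (n - k))"
    using on_coset card_coset by simp
  moreover have "(\<Sum>x\<in>?F. ff x) = (\<Sum>x\<in>?F - ?Q. ff x) + (\<Sum>x\<in>?Q. ff x)"
    by (rule sum.subset_diff[OF coset_subset finite_Fvec])
  ultimately have "(\<Sum>x\<in>?F - ?Q. ff x) = 0" unfolding of_real_eq_iff by linarith
  then have "\<forall>x\<in>?F - ?Q. ff x = 0"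
    by (subst sum_nonneg_eq_0_iff[symmetric]) (simp_all add: ff_def)
  then show ?thesis using on_coset x unfolding ff_def by auto
qed

lemma Fe_eq_coset_probability:
  fixes P :: "(nat \<Rightarrow> nat) \<Rightarrow> real"
  assumes P_nonneg: "\<forall>x\<in>Fvec d (2*n). P x \<ge> 0"
    and kraus: "has_kraus I (\<lambda>\<sigma>. Rmap d \<omega> n k h \<psi>0 xhat s t (chanA d \<omega> n P \<sigma>)) K J"
  shows "Fe I (opscale (1 / of_nat (d ^ k)) (codeproj d \<omega> n k h \<psi>0 s)) K J = (\<Sum>x\<in>vadd d xh ` L. P x)"
proof -
  let ?F = "Fvec d (2*n)"
  let ?\<rho> = "opscale (1 / of_nat (d ^ k)) (codeproj d \<omega> n k h \<psi>0 s)"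
  define K' where "K' x = opscale (complex_of_real (sqrt (P x))) (opmul I (Rop d \<omega> n k h \<psi>0 xhat s t) (Pauli d \<omega> n x))" for x
  have "has_kraus I (\<lambda>\<sigma>. Rmap d \<omega> n k h \<psi>0 xhat s t (chanA d \<omega> n P \<sigma>)) K' ?F"
    unfolding Rmap_def chanA_def K'_def
    by (rule has_kraus_sandwich_mixture[OF finite_Fvec]) (use P_nonneg in blast)
  then have "Fe I ?\<rho> K J = Fe I ?\<rho> K' ?F"
    by (rule Fe_kraus_independent[OF kraus _ finite_Fvec])
  also have "\<dots> = (\<Sum>x\<in>?F. P x * (cmod (fid_amp x))^2)"
    unfolding Fe_def K'_def tr_opmul_opscale_right fid_amp_def[symmetric]
    by (intro sum.cong refl) (use P_nonneg in \<open>simp add: norm_mult power_mult_distrib\<close>)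
  also have "\<dots> = (\<Sum>x\<in>?F. if x \<in> vadd d xh ` L then P x else 0)"
    by (intro sum.cong refl) (simp add: fid_amp_sq)
  also have "\<dots> = (\<Sum>x\<in>vadd d xh ` L. P x)"
    using coset_subset by (simp add: sum.inter_restrict[symmetric] Int_absorb1)
  finally show ?thesis .
qed

end

theorem lemma2:
  fixes d n k :: nat and \<omega> :: complex
    and L :: "(nat \<Rightarrow> nat) set"
    and g h :: "nat \<Rightarrow> nat \<Rightarrow> nat"
    and \<psi>0 :: "(nat \<Rightarrow> nat) \<Rightarrow> complex"
    and xhat :: "(nat \<Rightarrow> nat) \<Rightarrow> (nat \<Rightarrow> nat)"
    and P :: "(nat \<Rightarrow> nat) \<Rightarrow> real"
    and s t :: "nat \<Rightarrow> nat"
    and K :: "'j \<Rightarrow> (nat \<Rightarrow> nat) op" and J :: "'j set"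
  assumes d_prime: "prime d"
    and omega_root: "\<omega> ^ d = 1"
    and omega_prim: "\<forall>j. 0 < j \<and> j < d \<longrightarrow> \<omega> ^ j \<noteq> 1"
    and n_pos: "n \<ge> 1"
    and k_le: "k \<le> n"
    and L_sub: "L \<subseteq> Fvec d (2*n)"
    and L_zero: "(\<lambda>_. 0) \<in> L"
    and L_add: "\<forall>x\<in>L. \<forall>y\<in>L. vadd d x y \<in> L"
    and L_smul: "\<forall>a<d. \<forall>x\<in>L. vsmul d a x \<in> L"
    and L_isotropic: "\<forall>x\<in>L. \<forall>y\<in>L. sympl d n x y = 0"
    and gh_vec: "\<forall>i<n. g i \<in> Fvec d (2*n) \<and> h i \<in> Fvec d (2*n)"
    and hyp_gh: "\<forall>i<n. \<forall>j<n. sympl d n (g i) (h j) = (if i = j then 1 else 0)"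
    and hyp_gg: "\<forall>i<n. \<forall>j<n. sympl d n (g i) (g j) = 0"
    and hyp_hh: "\<forall>i<n. \<forall>j<n. sympl d n (h i) (h j) = 0"
    and L_span: "L = {lincomb d (n - k) c g | c. c \<in> Fvec d (n - k)}"
    and L_indep: "\<forall>c\<in>Fvec d (n - k). lincomb d (n - k) c g = (\<lambda>_. 0) \<longrightarrow> c = (\<lambda>_. 0)"
    and psi0_unit: "vinner (Fvec d n) \<psi>0 \<psi>0 = 1"
    and psi0_stab: "\<forall>i<n. \<forall>r\<in>Fvec d n. opapp (Fvec d n) (Pauli d \<omega> n (g i)) \<psi>0 r = \<psi>0 r"
    and xhat_coset: "\<forall>t'\<in>Fvec d (n - k). xhat t' \<in> Fvec d (2*n) \<and>
                        (\<forall>i<n - k. sympl d n (g i) (xhat t') = t' i)"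
    and P_nonneg: "\<forall>x\<in>Fvec d (2*n). P x \<ge> 0"
    and P_sum: "(\<Sum>x\<in>Fvec d (2*n). P x) = 1"
    and s_vec: "s \<in> Fvec d (n - k)"
    and t_vec: "t \<in> Fvec d (n - k)"
    and kraus: "has_kraus (Fvec d n)
                  (\<lambda>\<sigma>. Rmap d \<omega> n k h \<psi>0 xhat s t (chanA d \<omega> n P \<sigma>)) K J"
  shows "Fe (Fvec d n) (opscale (1 / of_nat (d ^ k)) (codeproj d \<omega> n k h \<psi>0 s)) K J
           = (\<Sum>x\<in>vadd d (xhat t) ` L. P x)"
proof -
  interpret stabilizer_code d \<omega> n k g h \<psi>0 xhat s t L
    by unfold_locales (fact d_prime omega_root omega_prim k_le L_sub gh_vec hyp_gh L_span L_indep
        psi0_unit psi0_stab xhat_coset s_vec t_vec)+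
  show ?thesis
    by (rule Fe_eq_coset_probability[OF P_nonneg kraus])
qed

end
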